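(* Let $X$ be a Banach space, $A$ a sectorial operator on $X$ generating the analytic semigroup $(T_t)_{t\ge0}$, $B$ a closed linear operator with $\mathrm D(A)\subseteq\mathrm D(B)$ and $B\mathrm D(A)\subseteq \mathrm D(A)$. Assume the generalized nested commutators $\{B,A^m\}$ are defined for all $m\in\mathbb Z_+$, satisfy $\{B,A^m\}\mathrm{D}(A)\subseteq\mathrm{D}(A)$, and that there are $\eta>0$, $K_1>0$ with $\|\{B,A^{m}\}R_{A}(\lambda)\|\le K_1\eta^m/|\lambda-a|$ for all $m\in\mathbb Z_+$, $\lambda\in\Sigma_{a,\phi}$. Let $\{\tau_k\}_{k\ge0}$ be an increasing sequence with $\tau_k\to\infty$ satisfying the averaged dwell-time condition: there are $\theta>0$ and $\chi_{\max}\in[0,\theta)$ with $|\tau_k-\tau_0-k\theta|\le\chi_{\max}$ for all $k\in\mathbb Z_+$; set $\chi_k:=\tau_k-\tau_0-k\theta$. Assume further that $\{B,A^m\}T_{\theta-\chi_{\max}}\in L(X)$ for all $m\in\mathbb Z_+$ and $$2e\,\chi_{\max}\,\limsup_{m\to\infty}\frac{\|\{B,A^m\}T_{\theta-\chi_{\max}}\|^{1/m}}{m}<1.$$ Consider the impulsive system $$\dot x(t)=Ax(t),\ t\ne\tau_k,\quad x(\tau_0^+)=x_0\in\mathrm D(A),\qquad x(t^+)=Bx(t),\ t=\tau_k\ (k\ge1),\tag{S}$$ and the comparison system $$\dot z(t)=Az(t),\ t\ne k\theta,\quad z(0^+)=z_0\in\mathrm D(A),\qquad z(t^+)=Bz(t)+\sum_{m=1}^{\infty}\frac{(\chi_{\max}+\chi_{k+1})^m}{m!}\{B,A^m\}z(t),\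 t=k\theta\ (k\ge1).\tag{C}$$ Then asymptotic stability of (C) implies asymptotic stability of (S).
   Context: $R_A(\lambda)=(\lambda\,\mathrm{id}-A)^{-1}$; $A$ closed, densely defined, is sectorial if for some $a\in\mathbb R$, $\phi\in(\pi/2,\pi)$, $\Sigma_{a,\phi}:=\{\lambda\in\mathbb C\setminus\{a\}:|\arg(\lambda-a)|<\phi\}\subset\rho(A)$ and $\|R_A(\lambda)\|\le K/|\lambda-a|$ on $\Sigma_{a,\phi}$ for some $K>0$. Generalized nested commutators: $\{B,A^0\}:=B$; given $\{B,A^m\}$ with domain containing $\mathrm D(A)$, on $\widehat{\mathrm D}:=\{x\in \mathrm{D}(A)\cap\mathrm{D}(\{B,A^m\}) : Ax\in\mathrm{D}(\{B,A^m\}),\ \{B,A^m\}x\in\mathrm{D}(A)\}$ (required to contain $\mathrm D(A)$) the operator $x\mapsto \{B,A^m\}Ax-A\{B,A^m\}x$ is required to be closable, and $\{B,A^{m+1}\}$ is its closure. Solutions are understood piecewise via the semigroup: for (S), $x(t)=T_{t-\tau_k}x(\tau_k^+)$ for $t\in(\tau_k,\tau_{k+1}]$ and $x(\tau_{k}^+)=Bx(\tau_{k})$ for $k\ge1$; analogously for (C) with jump times $k\theta$. A system of this kind is asymptotically stable if (stability) for every $\varepsilon>0$ there is $\delta>0$ such that every solution with initial value of norm $<\delta$ satisfies $\|x(t)\|<\varepsilon$ for all $t$, and (attractivity) every solution tends to $0$ as $t\to\infty$. *)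

theory Defs
  imports "HOL-Analysis.Analysis"
begin

text \<open>A complex Banach space is modelled as a real Banach space 'a together with
  a complex scalar multiplication cs extending the real one and compatible with the norm.\<close>
definition complex_scaling :: "(complex \<Rightarrow> 'a::banach \<Rightarrow> 'a) \<Rightarrow> bool" where
  "complex_scaling cs \<longleftrightarrow>
     (\<forall>r x. cs (complex_of_real r) x = r *\<^sub>R x) \<and>
     (\<forall>a b x. cs (a * b) x = cs a (cs b x)) \<and>
     (\<forall>a b x. cs (a + b) x = cs a x + cs b x) \<and>
     (\<forall>a x y. cs a (x + y) = cs a x + cs a y) \<and>
     (\<forall>a x. norm (cs a x) = cmod a * norm x)"

type_synonym 'a opr = "'a set \<times> ('a \<Rightarrow> 'a)"

definition dom :: "'a opr \<Rightarrow> 'a set" where "dom A = fst A"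
definition app :: "'a opr \<Rightarrow> 'a \<Rightarrow> 'a" where "app A = snd A"

definition graph :: "'a opr \<Rightarrow> ('a \<times> 'a) set" where
  "graph A = {(x, app A x) | x. x \<in> dom A}"

definition lin_op :: "(complex \<Rightarrow> 'a::banach \<Rightarrow> 'a) \<Rightarrow> 'a opr \<Rightarrow> bool" where
  "lin_op cs A \<longleftrightarrow>
     0 \<in> dom A \<and>
     (\<forall>x\<in>dom A. \<forall>y\<in>dom A. x + y \<in> dom A \<and> app A (x + y) = app A x + app A y) \<and>
     (\<forall>c. \<forall>x\<in>dom A. cs c x \<in> dom A \<and> app A (cs c x) = cs c (app A x))"

definition closed_op :: "'a::banach opr \<Rightarrow> bool" where
  "closed_op A \<longleftrightarrow> closed (graph A)"

definition densely_defined :: "'a::banach opr \<Rightarrow> bool" where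
  "densely_defined A \<longleftrightarrow> closure (dom A) = UNIV"

definition is_closure_of :: "'a::banach opr \<Rightarrow> 'a opr \<Rightarrow> bool" where
  "is_closure_of G H \<longleftrightarrow> graph G = closure (graph H)"

definition resolvent :: "(complex \<Rightarrow> 'a::banach \<Rightarrow> 'a) \<Rightarrow> 'a opr \<Rightarrow> complex \<Rightarrow> 'a \<Rightarrow> 'a" where
  "resolvent cs A l = inv_into (dom A) (\<lambda>x. cs l x - app A x)"

definition in_resolvent_set :: "(complex \<Rightarrow> 'a::banach \<Rightarrow> 'a) \<Rightarrow> 'a opr \<Rightarrow> complex \<Rightarrow> bool" where
  "in_resolvent_set cs A l \<longleftrightarrow>
     bij_betw (\<lambda>x. cs l x - app A x) (dom A) UNIV \<and> bounded_linear (resolvent cs A l)"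

definition sector :: "real \<Rightarrow> real \<Rightarrow> complex set" where
  "sector a \<phi> = {l. l \<noteq> complex_of_real a \<and> \<bar>Arg (l - complex_of_real a)\<bar> < \<phi>}"

definition sectorial_with ::
  "(complex \<Rightarrow> 'a::banach \<Rightarrow> 'a) \<Rightarrow> 'a opr \<Rightarrow> real \<Rightarrow> real \<Rightarrow> real \<Rightarrow> bool" where
  "sectorial_with cs A a \<phi> K \<longleftrightarrow>
     lin_op cs A \<and> closed_op A \<and> densely_defined A \<and>
     pi / 2 < \<phi> \<and> \<phi> < pi \<and> K > 0 \<and>
     (\<forall>l\<in>sector a \<phi>. in_resolvent_set cs A l \<and>
        onorm (resolvent cs A l) \<le> K / cmod (l - complex_of_real a))"

definition generates_semigroup :: "'a::banach opr \<Rightarrow> (real \<Rightarrow> 'a \<Rightarrow> 'a) \<Rightarrow> bool" where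
  "generates_semigroup A T \<longleftrightarrow>
     (\<forall>t\<ge>0. bounded_linear (T t)) \<and>
     T 0 = id \<and>
     (\<forall>s\<ge>0. \<forall>t\<ge>0. T (s + t) = T s \<circ> T t) \<and>
     (\<forall>x. ((\<lambda>t. T t x) \<longlongrightarrow> x) (at_right 0)) \<and>
     dom A = {x. \<exists>y. ((\<lambda>h. (1 / h) *\<^sub>R (T h x - x)) \<longlongrightarrow> y) (at_right 0)} \<and>
     (\<forall>x\<in>dom A. ((\<lambda>h. (1 / h) *\<^sub>R (T h x - x)) \<longlongrightarrow> app A x) (at_right 0))"

text \<open>Generalized nested commutators: C m = {B, A^m}.\<close>
definition hatD :: "'a opr \<Rightarrow> 'a opr \<Rightarrow> 'a set" where
  "hatD A Cm = {x. x \<in> dom A \<and> x \<in> dom Cm \<and> app A x \<in> dom Cm \<and> app Cm x \<in> dom A}"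

definition nested_commutators :: "'a::banach opr \<Rightarrow> 'a opr \<Rightarrow> (nat \<Rightarrow> 'a opr) \<Rightarrow> bool" where
  "nested_commutators A B C \<longleftrightarrow>
     C 0 = B \<and>
     (\<forall>m. dom A \<subseteq> dom (C m) \<and> dom A \<subseteq> hatD A (C m) \<and>
          is_closure_of (C (Suc m))
            (hatD A (C m), \<lambda>x. app (C m) (app A x) - app A (app (C m) x)))"

text \<open>Piecewise solutions of an impulsive system with jump times tau k, jump maps J k
  (applied at tau k, k >= 1), and semigroup T. post k is the state x(tau_k^+).\<close>
primrec post :: "(real \<Rightarrow> 'a \<Rightarrow> 'a) \<Rightarrow> (nat \<Rightarrow> real) \<Rightarrow> (nat \<Rightarrow> 'a \<Rightarrow> 'a) \<Rightarrow> 'a \<Rightarrow> nat \<Rightarrow> 'a" where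
  "post T tau J x0 0 = x0"
| "post T tau J x0 (Suc k) = J (Suc k) (T (tau (Suc k) - tau k) (post T tau J x0 k))"

definition imp_sol :: "(real \<Rightarrow> 'a \<Rightarrow> 'a) \<Rightarrow> (nat \<Rightarrow> real) \<Rightarrow> (nat \<Rightarrow> 'a \<Rightarrow> 'a) \<Rightarrow> 'a \<Rightarrow> real \<Rightarrow> 'a" where
  "imp_sol T tau J x0 t =
     (if t \<le> tau 0 then x0
      else (let k = (LEAST k. t \<le> tau (Suc k)) in T (t - tau k) (post T tau J x0 k)))"

definition asym_stable ::
  "(real \<Rightarrow> 'a::real_normed_vector \<Rightarrow> 'a) \<Rightarrow> (nat \<Rightarrow> real) \<Rightarrow> (nat \<Rightarrow> 'a \<Rightarrow> 'a) \<Rightarrow> 'a set \<Rightarrow> bool" where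
  "asym_stable T tau J D \<longleftrightarrow>
     (\<forall>\<epsilon>>0. \<exists>\<delta>>0. \<forall>x0\<in>D. norm x0 < \<delta> \<longrightarrow>
        (\<forall>t\<ge>tau 0. norm (imp_sol T tau J x0 t) < \<epsilon>)) \<and>
     (\<forall>x0\<in>D. ((\<lambda>t. imp_sol T tau J x0 t) \<longlongrightarrow> 0) at_top)"

end

theory Submission
  imports Defs
begin

text \<open>Put t0 = \<theta> - \<chi>max and \<sigma>_k = \<chi>max + \<chi>_k \<in> [0, 2\<chi>max]. Since
  {B,A^(m+1)} = {B,A^m} A - A {B,A^m}, the derivative of
  r \<mapsto> T_r \<Sum>m\<le>n r^m/m! {B,A^m} T_t0 T_(\<sigma>-r) w telescopes to its last term, and the limsup
  condition (together with m^m/m! \<le> e^m) makes that term vanish as n \<rightarrow> \<infinity>. Hence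
  B T_(\<sigma>+t0) = T_\<sigma> (B + \<Sum>m\<ge>1 \<sigma>^m/m! {B,A^m}) T_t0, first on D(A) and then everywhere by
  density. Inductively, x(\<tau>_(k+1)^+) = T_(\<sigma>_(k+1)) z(k\<theta>^+) for the solution z of (C) started at
  its first jump applied to T_t0 x0, so between jumps x(t) is a uniformly bounded flow applied to
  z at a time lagging t by a bounded amount. Stability and attractivity of (C), extended by
  linearity and density from D(A) to all initial values, therefore pass to (S).\<close>

lemma uniform_boundedness:
  fixes f :: "nat \<Rightarrow> 'a::banach \<Rightarrow> 'b::real_normed_vector"
  assumes bl: "\<And>n. bounded_linear (f n)" and pb: "\<And>x. \<exists>c. \<forall>n. norm (f n x) \<le> c"
  shows "\<exists>M. \<forall>n. onorm (f n) \<le> M"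
proof -
  define F where "F k = {x. \<forall>n. norm (f n x) \<le> real k}" for k :: nat
  have clF: "closed (F k)" for k
  proof -
    have "F k = (\<Inter>n. {x. norm (f n x) \<le> real k})" by (auto simp: F_def)
    moreover have "closed {x. norm (f n x) \<le> real k}" for n
      by (intro closed_Collect_le continuous_intros linear_continuous_on[OF bl])
    ultimately show ?thesis by auto
  qed
  have U: "(\<Union>k. F k) = UNIV"
  proof safe
    fix x
    obtain c where c: "\<forall>n. norm (f n x) \<le> c" using pb by blast
    obtain k::nat where "c \<le> real k" using real_arch_simple by blast
    then have "x \<in> F k" using c by (auto simp: F_def intro: order_trans)
    then show "x \<in> (\<Union>k. F k)" by blast
  qed simp
  have "\<exists>k. interior (F k) \<noteq> {}"
  proof (rule ccontr)
    assume "\<not> ?thesis"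
    then have "Met_TC.mtopology interior_of \<Union>(range F) = {}"
    proof (intro Met_TC.metric_Baire_category_alt)
      show "Met_TC.mcomplete TYPE('a)" using complete_UNIV mcomplete_iff_complete by blast
    qed (use clF \<open>\<not> (\<exists>k. interior (F k) \<noteq> {})\<close> in auto)
    then show False using U by simp
  qed
  then obtain k x0 where "x0 \<in> interior (F k)" by blast
  then obtain r where r: "r > 0" "ball x0 r \<subseteq> F k" using mem_interior by blast
  have "onorm (f n) \<le> 4 * real k / r" for n
  proof (rule onorm_bound)
    show "0 \<le> 4 * real k / r" using r by simp
    fix x
    show "norm (f n x) \<le> 4 * real k / r * norm x"
    proof (cases "x = 0")
      case True then show ?thesis using bl[of n] by (simp add: linear_simps)
    next
      case False
      define y where "y = (r / 2 / norm x) *\<^sub>R x"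
      have ny: "norm y = r/2" using False r by (simp add: y_def)
      have "x0 + y \<in> ball x0 r" "x0 \<in> ball x0 r" using r ny by (simp_all add: dist_norm)
      then have "x0 + y \<in> F k" "x0 \<in> F k" using r(2) by blast+
      then have "norm (f n (x0 + y)) \<le> k" "norm (f n x0) \<le> k" by (auto simp: F_def)
      moreover have "f n y = f n (x0 + y) - f n x0" using bl[of n] by (simp add: linear_simps)
      ultimately have "norm (f n y) \<le> 2 * k"
        using norm_triangle_ineq4[of "f n (x0 + y)" "f n x0"] by simp
      moreover have "f n y = (r / 2 / norm x) *\<^sub>R f n x" using bl[of n] by (simp add: y_def linear_simps)
      ultimately have "(r / 2 / norm x) * norm (f n x) \<le> 2 * k" using r by simp
      then show ?thesis using r False by (simp add: field_simps)
    qed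
  qed
  then show ?thesis by blast
qed

locale C0_semigroup =
  fixes T :: "real \<Rightarrow> 'a::banach \<Rightarrow> 'a"
  assumes bounded_linear_T: "\<And>t. t \<ge> 0 \<Longrightarrow> bounded_linear (T t)"
    and T0: "T 0 = id"
    and semigroup_law: "\<And>s t. s \<ge> 0 \<Longrightarrow> t \<ge> 0 \<Longrightarrow> T (s + t) = T s \<circ> T t"
    and strongly_continuous: "\<And>x. ((\<lambda>t. T t x) \<longlongrightarrow> x) (at_right 0)"
begin

lemma T_add_apply: "s \<ge> 0 \<Longrightarrow> t \<ge> 0 \<Longrightarrow> T (s + t) x = T s (T t x)"
  using semigroup_law by simp

lemma T_commute: "s \<ge> 0 \<Longrightarrow> t \<ge> 0 \<Longrightarrow> T s (T t x) = T t (T s x)"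
  by (metis T_add_apply add.commute)

lemma T_add: "t \<ge> 0 \<Longrightarrow> T t (x + y) = T t x + T t y"
  using bounded_linear_T bounded_linear.linear linear_add by blast
lemma T_diff: "t \<ge> 0 \<Longrightarrow> T t (x - y) = T t x - T t y"
  using bounded_linear_T bounded_linear.linear linear_diff by blast
lemma T_scaleR: "t \<ge> 0 \<Longrightarrow> T t (c *\<^sub>R x) = c *\<^sub>R T t x"
  using bounded_linear_T bounded_linear.linear linear_scale by blast
lemma T_minus: "t \<ge> 0 \<Longrightarrow> T t (- x) = - T t x"
  using bounded_linear_T bounded_linear.linear linear_neg by blast
lemma norm_T_le: "t \<ge> 0 \<Longrightarrow> norm (T t x) \<le> onorm (T t) * norm x"
  using bounded_linear_T onorm by blast
lemma onorm_T_nonneg: "t \<ge> 0 \<Longrightarrow> 0 \<le> onorm (T t)"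
  using bounded_linear_T onorm_pos_le by blast

lemma strong_continuity_at_0:
  assumes "e > 0" shows "\<exists>d>0. \<forall>t. 0 \<le> t \<and> t < d \<longrightarrow> norm (T t x - x) < e"
proof -
  have "eventually (\<lambda>t. dist (T t x) x < e) (at_right 0)"
    using strongly_continuous[of x] assms by (simp add: tendsto_iff)
  then obtain b where b: "b > 0" "\<And>y. y > 0 \<Longrightarrow> y < b \<Longrightarrow> dist (T y x) x < e"
    unfolding eventually_at_right_field by auto
  have "\<forall>t. 0 \<le> t \<and> t < b \<longrightarrow> norm (T t x - x) < e"
  proof safe
    fix t :: real assume "0 \<le> t" "t < b"
    then show "norm (T t x - x) < e"
      using b assms by (cases "t = 0") (auto simp: T0 dist_norm)
  qed
  then show ?thesis using b by blast
qed

lemma onorm_bounded_near_0: "\<exists>d>0. \<exists>M. \<forall>t. 0 \<le> t \<and> t \<le> d \<longrightarrow> onorm (T t) \<le> M"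
proof (rule ccontr)
  assume not: "\<not> ?thesis"
  have "\<forall>n::nat. \<exists>t. 0 \<le> t \<and> t \<le> 1 / real (Suc n) \<and> onorm (T t) > real n"
  proof
    fix n :: nat
    have "\<not> (\<forall>t. 0 \<le> t \<and> t \<le> 1 / real (Suc n) \<longrightarrow> onorm (T t) \<le> real n)"
      using not by (metis of_nat_0_less_iff zero_less_Suc zero_less_divide_1_iff)
    then show "\<exists>t. 0 \<le> t \<and> t \<le> 1 / real (Suc n) \<and> onorm (T t) > real n" by force
  qed
  then obtain tn where tn: "\<And>n. 0 \<le> tn n" "\<And>n. tn n \<le> 1 / real (Suc n)" "\<And>n. onorm (T (tn n)) > real n"
    by metis
  have "\<exists>c. \<forall>n. norm (T (tn n) x) \<le> c" for x
  proof -
    have "(\<lambda>n. T (tn n) x) \<longlonglongrightarrow> x"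
    proof (rule LIMSEQ_I)
      fix r :: real assume "r > 0"
      then obtain d where d: "d > 0" "\<And>t. 0 \<le> t \<and> t < d \<Longrightarrow> norm (T t x - x) < r"
        using strong_continuity_at_0 by blast
      obtain no :: nat where no: "1 / d < real no" using reals_Archimedean2 by blast
      have "norm (T (tn n) x - x) < r" if "n \<ge> no" for n
      proof -
        have "1 / d < real (Suc n)" using no that of_nat_mono[OF that] by linarith
        then have "1 / real (Suc n) < d"
          using d(1) by (simp add: field_simps)
        then show ?thesis using tn(1,2)[of n] d(2) by force
      qed
      then show "\<exists>no. \<forall>n\<ge>no. norm (T (tn n) x - x) < r" by blast
    qed
    then have "Bseq (\<lambda>n. T (tn n) x)" using convergent_imp_Bseq convergentI by blast
    then show ?thesis unfolding Bseq_def by blast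
  qed
  then obtain M where M: "\<And>n. onorm (T (tn n)) \<le> M"
    using uniform_boundedness[of "\<lambda>n. T (tn n)"] bounded_linear_T tn(1) by blast
  obtain n :: nat where "M < real n" using reals_Archimedean2 by blast
  then show False using M[of n] tn(3)[of n] by simp
qed

lemma onorm_bounded_on_interval: "\<exists>M>0. \<forall>t. 0 \<le> t \<and> t \<le> R \<longrightarrow> onorm (T t) \<le> M"
proof -
  obtain d M0 where d: "d > 0" "\<And>t. 0 \<le> t \<and> t \<le> d \<Longrightarrow> onorm (T t) \<le> M0"
    using onorm_bounded_near_0 by blast
  have M0: "M0 \<ge> 0" using d(2)[of 0] onorm_T_nonneg[of 0] d(1) by linarith
  have "\<exists>M\<ge>0. \<forall>t. 0 \<le> t \<and> t \<le> real n * d \<longrightarrow> onorm (T t) \<le> M" for n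
  proof (induction n)
    case 0
    then show ?case using d M0 by force
  next
    case (Suc n)
    then obtain M where M: "M \<ge> 0" "\<And>t. 0 \<le> t \<and> t \<le> real n * d \<Longrightarrow> onorm (T t) \<le> M" by blast
    have "onorm (T t) \<le> max M (max M0 (M * M0))" if t: "0 \<le> t" "t \<le> real (Suc n) * d" for t
    proof (cases "t \<le> real n * d")
      case True 
      then have "onorm (T t) \<le> M" using M(2) t by blast
      then show ?thesis by simp
    next
      case False
      show ?thesis
      proof (cases "t \<le> d")
        case True
        then have "onorm (T t) \<le> M0" using d(2) t by blast
        then show ?thesis by simp
      next
        case False2: False
        then have t1: "t - d \<ge> 0" "t - d \<le> real n * d" using t d(1)
          by (auto simp: algebra_simps)
        have "T t = T (t - d) \<circ> T d" using semigroup_law[of "t - d" d] t1 d(1) by simp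
        then have "onorm (T t) \<le> onorm (T (t - d)) * onorm (T d)"
          using onorm_compose bounded_linear_T t1 d(1) by (metis less_eq_real_def)
        also have "\<dots> \<le> M * M0"
          using M(2)[OF conjI[OF t1]] d(2)[of d] d(1) onorm_T_nonneg[of d] onorm_T_nonneg[OF t1(1)]
          by (intro mult_mono) auto
        finally show ?thesis by simp
      qed
    qed
    then show ?case using M by (intro exI[of _ "max M (max M0 (M * M0))"]) auto
  qed
  moreover obtain n :: nat where "R / d < real n" using reals_Archimedean2 by blast
  then have "R \<le> real n * d" using d(1) by (simp add: field_simps)
  ultimately obtain M where "M \<ge> 0" "\<And>t. 0 \<le> t \<and> t \<le> R \<Longrightarrow> onorm (T t) \<le> M"
    by (meson order_trans)
  then show ?thesis by (intro exI[of _ "M + 1"]) force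
qed

lemma norm_T_bounded_on_interval:
  obtains M where "M \<ge> 1" "\<And>t y. 0 \<le> t \<Longrightarrow> t \<le> R \<Longrightarrow> norm (T t y) \<le> M * norm y"
proof -
  obtain M where M: "M > 0" "\<And>t. 0 \<le> t \<and> t \<le> R \<Longrightarrow> onorm (T t) \<le> M"
    using onorm_bounded_on_interval by blast
  have "norm (T t y) \<le> max M 1 * norm y" if "0 \<le> t" "t \<le> R" for t y
  proof -
    have "norm (T t y) \<le> onorm (T t) * norm y" using norm_T_le that by blast
    also have "\<dots> \<le> max M 1 * norm y" using M(2)[of t] that by (intro mult_right_mono) auto
    finally show ?thesis .
  qed
  then show ?thesis using that[of "max M 1"] by simp
qed

lemma strong_continuity:
  assumes t: "t \<ge> 0" and e: "e > 0"
  shows "\<exists>d>0. \<forall>s\<ge>0. \<bar>s - t\<bar> < d \<longrightarrow> norm (T s x - T t x) < e"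
proof -
  obtain M where M: "M > 0" "\<And>s. 0 \<le> s \<and> s \<le> t + 1 \<Longrightarrow> onorm (T s) \<le> M"
    using onorm_bounded_on_interval by blast
  obtain d0 where d0: "d0 > 0" "\<And>h. 0 \<le> h \<and> h < d0 \<Longrightarrow> norm (T h x - x) < e / M"
    using strong_continuity_at_0[where e="e / M" and x=x] e M by auto
  have "norm (T s x - T t x) < e" if s: "s \<ge> 0" "\<bar>s - t\<bar> < min d0 1" for s
  proof (cases "s \<ge> t")
    case True
    have "T s x = T t (T (s - t) x)" using T_add_apply[of t "s - t"] t True by simp
    then have "T s x - T t x = T t (T (s - t) x - x)" using T_diff t by simp
    then have "norm (T s x - T t x) \<le> onorm (T t) * norm (T (s - t) x - x)" using norm_T_le t by simp
    also have "\<dots> \<le> M * norm (T (s - t) x - x)" using M(2)[of t] t by (intro mult_right_mono) auto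
    also have "\<dots> < M * (e / M)" using d0(2)[of "s - t"] True s M by (intro mult_strict_left_mono) auto
    finally show ?thesis using M by simp
  next
    case False
    have "T t x = T s (T (t - s) x)" using T_add_apply[of s "t - s"] s False by simp
    then have "T s x - T t x = T s (x - T (t - s) x)" using T_diff s by simp
    then have "norm (T s x - T t x) \<le> onorm (T s) * norm (T (t - s) x - x)"
      using norm_T_le s by (simp add: norm_minus_commute)
    also have "\<dots> \<le> M * norm (T (t - s) x - x)" using M(2)[of s] s False by (intro mult_right_mono) auto
    also have "\<dots> < M * (e / M)" using d0(2)[of "t - s"] False s M by (intro mult_strict_left_mono) auto
    finally show ?thesis using M by simp
  qed
  then show ?thesis using d0(1) by (intro exI[of _ "min d0 1"]) auto
qed

definition generator_limit :: "'a \<Rightarrow> 'a \<Rightarrow> bool" where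
  "generator_limit y v \<longleftrightarrow> ((\<lambda>h. (1 / h) *\<^sub>R (T h y - y)) \<longlongrightarrow> v) (at_right 0)"

lemma generator_limit_approx:
  assumes "generator_limit y v" "e > 0"
  shows "\<exists>d>0. \<forall>h. 0 \<le> h \<and> h < d \<longrightarrow> norm (T h y - y - h *\<^sub>R v) \<le> e * h"
proof -
  have "eventually (\<lambda>h. dist ((1 / h) *\<^sub>R (T h y - y)) v < e) (at_right 0)"
    using assms by (simp add: generator_limit_def tendsto_iff)
  then obtain b where b: "b > 0" "\<And>h. h > 0 \<Longrightarrow> h < b \<Longrightarrow> dist ((1 / h) *\<^sub>R (T h y - y)) v < e"
    unfolding eventually_at_right_field by auto
  have "norm (T h y - y - h *\<^sub>R v) \<le> e * h" if h: "0 \<le> h" "h < b" for h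
  proof (cases "h = 0")
    case True then show ?thesis by (simp add: T0)
  next
    case False
    then have hp: "h > 0" using h by simp
    have "T h y - y - h *\<^sub>R v = h *\<^sub>R ((1 / h) *\<^sub>R (T h y - y) - v)"
      using hp by (simp add: algebra_simps)
    then have "norm (T h y - y - h *\<^sub>R v) = h * dist ((1 / h) *\<^sub>R (T h y - y)) v"
      using hp by (simp add: dist_norm)
    also have "\<dots> \<le> h * e" using b(2)[OF hp h(2)] hp by simp
    finally show ?thesis by (simp add: mult.commute)
  qed
  then show ?thesis using b(1) by blast
qed

lemma generator_limit_T:
  assumes "generator_limit y v" "t \<ge> 0"
  shows "generator_limit (T t y) (T t v)"
proof -
  have "((\<lambda>h. T t ((1 / h) *\<^sub>R (T h y - y))) \<longlongrightarrow> T t v) (at_right 0)"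
    using assms bounded_linear.tendsto[OF bounded_linear_T[OF assms(2)]] unfolding generator_limit_def by blast
  moreover have "eventually (\<lambda>h. T t ((1 / h) *\<^sub>R (T h y - y)) = (1 / h) *\<^sub>R (T h (T t y) - T t y)) (at_right 0)"
    unfolding eventually_at_right_field
  proof (intro exI[of _ 1] conjI allI impI)
    fix h :: real assume "h > 0"
    then show "T t ((1 / h) *\<^sub>R (T h y - y)) = (1 / h) *\<^sub>R (T h (T t y) - T t y)"
      using assms(2) by (simp add: T_scaleR T_diff T_commute)
  qed simp
  ultimately show ?thesis unfolding generator_limit_def using tendsto_cong by fastforce
qed

lemma orbit_increment:
  assumes "0 \<le> a" "a \<le> b"
  shows "T b y - T a y - (b - a) *\<^sub>R T a v = T a (T (b - a) y - y - (b - a) *\<^sub>R v)"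
  using T_add_apply[of a "b - a" y] assms by (simp add: T_diff T_scaleR)

lemma orbit_has_derivative:
  assumes g: "generator_limit y v" and t: "t \<ge> 0"
  shows "((\<lambda>s. T s y) has_derivative (\<lambda>h. h *\<^sub>R T t v)) (at t within {0..})"
  unfolding has_derivative_within_alt
proof (intro conjI allI impI)
  show "bounded_linear (\<lambda>h. h *\<^sub>R T t v)" by (rule bounded_linear_scaleR_left)
  fix e :: real assume e: "e > 0"
  obtain M where M: "M > 0" "\<And>s. 0 \<le> s \<and> s \<le> t + 1 \<Longrightarrow> onorm (T s) \<le> M"
    using onorm_bounded_on_interval by blast
  define e' where "e' = e / (M + 1)"
  have e': "e' > 0" using e M by (simp add: e'_def)
  obtain d1 where d1: "d1 > 0" "\<And>h. 0 \<le> h \<and> h < d1 \<Longrightarrow> norm (T h y - y - h *\<^sub>R v) \<le> e' * h"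
    using generator_limit_approx[OF g e'] by blast
  obtain d2 where d2: "d2 > 0" "\<And>s. s \<ge> 0 \<Longrightarrow> \<bar>s - t\<bar> < d2 \<Longrightarrow> norm (T s v - T t v) < e'"
    using strong_continuity[OF t e'] by blast
  have increment: "norm (T b y - T a y - (b - a) *\<^sub>R T a v) \<le> M * (e' * (b - a))"
    if ab: "0 \<le> a" "a \<le> b" "b \<le> t + 1" "b - a < d1" for a b
  proof -
    have "norm (T b y - T a y - (b - a) *\<^sub>R T a v) \<le> onorm (T a) * norm (T (b - a) y - y - (b - a) *\<^sub>R v)"
      unfolding orbit_increment[OF ab(1,2)] using norm_T_le ab(1) by blast
    also have "\<dots> \<le> M * (e' * (b - a))"
      using M(2)[of a] d1(2)[of "b - a"] ab M(1) by (intro mult_mono) auto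
    finally show ?thesis .
  qed
  have "norm (T s y - T t y - (s - t) *\<^sub>R T t v) \<le> e * norm (s - t)"
    if s: "s \<in> {0..}" "norm (s - t) < min 1 (min d1 d2)" for s
  proof (cases "s \<ge> t")
    case True
    have "norm (T s y - T t y - (s - t) *\<^sub>R T t v) \<le> M * (e' * (s - t))"
      using increment[of t s] t True s by auto
    also have "\<dots> \<le> e * norm (s - t)"
      using True M e by (simp add: e'_def field_simps)
    finally show ?thesis .
  next
    case False
    have "T s y - T t y - (s - t) *\<^sub>R T t v
        = - (T t y - T s y - (t - s) *\<^sub>R T s v) + (t - s) *\<^sub>R (T t v - T s v)"
      by (simp add: algebra_simps)
    then have "norm (T s y - T t y - (s - t) *\<^sub>R T t v)
        \<le> norm (T t y - T s y - (t - s) *\<^sub>R T s v) + (t - s) * norm (T t v - T s v)"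
      using False by (metis abs_of_nonneg diff_ge_0_iff_ge nle_le norm_minus_cancel norm_scaleR norm_triangle_ineq)
    also have "\<dots> \<le> M * (e' * (t - s)) + (t - s) * e'"
      using increment[of s t] d2(2)[of s] False s t
      by (intro add_mono mult_left_mono) (auto simp: norm_minus_commute abs_minus_commute)
    also have "\<dots> = (M + 1) * e' * (t - s)" by (simp add: algebra_simps)
    also have "\<dots> = e * norm (s - t)" using M False by (simp add: e'_def)
    finally show ?thesis .
  qed
  then show "\<exists>d>0. \<forall>s\<in>{0..}. norm (s - t) < d \<longrightarrow> norm (T s y - T t y - (s - t) *\<^sub>R T t v) \<le> e * norm (s - t)"
    using d1(1) d2(1) by (intro exI[of _ "min 1 (min d1 d2)"]) auto
qed

lemma orbit_along_has_vector_derivative: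
  assumes g: "(g has_vector_derivative g') (at r within S)" and S: "S \<subseteq> {0..R}" and r: "r \<in> S"
    and ga: "generator_limit (g r) u"
  shows "((\<lambda>s. T s (g s)) has_vector_derivative (T r u + T r g')) (at r within S)"
  unfolding has_vector_derivative_def has_derivative_within_alt
proof (intro conjI allI impI)
  show "bounded_linear (\<lambda>h. h *\<^sub>R (T r u + T r g'))" by (rule bounded_linear_scaleR_left)
  fix e :: real assume e: "e > 0"
  obtain M where M: "M > 0" "\<And>s. 0 \<le> s \<and> s \<le> R \<Longrightarrow> onorm (T s) \<le> M" using onorm_bounded_on_interval by blast
  define e' where "e' = e / (M + 2)"
  have e': "e' > 0" using e M by (simp add: e'_def)
  have r0: "r \<ge> 0" using S r by auto
  obtain d1 where d1: "d1 > 0" "\<And>s. s \<in> S \<Longrightarrow> norm (s - r) < d1 \<Longrightarrow> norm (g s - g r - (s - r) *\<^sub>R g') \<le> e' * norm (s - r)"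
    using g e' unfolding has_vector_derivative_def has_derivative_within_alt by blast
  obtain d2 where d2: "d2 > 0" "\<And>s. s \<in> {0..} \<Longrightarrow> norm (s - r) < d2 \<Longrightarrow>
      norm (T s (g r) - T r (g r) - (s - r) *\<^sub>R T r u) \<le> e' * norm (s - r)"
    using orbit_has_derivative[OF ga r0] e' unfolding has_derivative_within_alt by blast
  obtain d3 where d3: "d3 > 0" "\<And>s. s \<ge> 0 \<Longrightarrow> \<bar>s - r\<bar> < d3 \<Longrightarrow> norm (T s g' - T r g') < e'"
    using strong_continuity[OF r0 e'] by blast
  have "norm (T s (g s) - T r (g r) - (s - r) *\<^sub>R (T r u + T r g')) \<le> e * norm (s - r)"
    if s: "s \<in> S" "norm (s - r) < min d1 (min d2 d3)" for s
  proof -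
    have s0: "s \<ge> 0" "s \<le> R" using s S by auto
    have ex: "T s (g s - g r - (s - r) *\<^sub>R g') = T s (g s) - T s (g r) - (s - r) *\<^sub>R T s g'"
      using s0 by (simp add: T_diff T_scaleR)
    have eq: "T s (g s) - T r (g r) - (s - r) *\<^sub>R (T r u + T r g') =
      T s (g s - g r - (s - r) *\<^sub>R g') + (s - r) *\<^sub>R (T s g' - T r g') +
      (T s (g r) - T r (g r) - (s - r) *\<^sub>R T r u)"
      unfolding ex by (simp add: algebra_simps)
    have "norm (T s (g s) - T r (g r) - (s - r) *\<^sub>R (T r u + T r g')) \<le>
      norm (T s (g s - g r - (s - r) *\<^sub>R g')) + norm ((s - r) *\<^sub>R (T s g' - T r g')) +
      norm (T s (g r) - T r (g r) - (s - r) *\<^sub>R T r u)"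
      unfolding eq by (meson norm_triangle_le norm_triangle_ineq add_mono order_refl order_trans)
    also have "\<dots> \<le> M * (e' * norm (s - r)) + norm (s - r) * e' + e' * norm (s - r)"
    proof (intro add_mono)
      have "norm (T s (g s - g r - (s - r) *\<^sub>R g')) \<le> onorm (T s) * norm (g s - g r - (s - r) *\<^sub>R g')"
        using norm_T_le[OF s0(1)] by blast
      also have "\<dots> \<le> M * (e' * norm (s - r))"
        using M(2)[of s] s0 d1(2)[OF s(1)] s(2) M(1) by (intro mult_mono) auto
      finally show "norm (T s (g s - g r - (s - r) *\<^sub>R g')) \<le> M * (e' * norm (s - r))" .
      show "norm ((s - r) *\<^sub>R (T s g' - T r g')) \<le> norm (s - r) * e'"
        using d3(2)[OF s0(1)] s(2) by (simp add: mult_left_mono)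
      show "norm (T s (g r) - T r (g r) - (s - r) *\<^sub>R T r u) \<le> e' * norm (s - r)"
        using d2(2)[of s] s0 s(2) by simp
    qed
    also have "\<dots> = (M + 2) * e' * norm (s - r)" by (simp add: algebra_simps)
    also have "\<dots> = e * norm (s - r)" using M by (simp add: e'_def)
    finally show ?thesis .
  qed
  then show "\<exists>d>0. \<forall>s\<in>S. norm (s - r) < d \<longrightarrow>
      norm (T s (g s) - T r (g r) - (s - r) *\<^sub>R (T r u + T r g')) \<le> e * norm (s - r)"
    using d1(1) d2(1) d3(1) by (intro exI[of _ "min d1 (min d2 d3)"]) auto
qed

end

lemma sum_exp_coefficients_telescope:
  fixes F :: "nat \<Rightarrow> 'a::real_vector" and r :: real
  shows "(\<Sum>m<Suc n. (real m * r ^ (m - 1) / fact m) *\<^sub>R F m - (r ^ m / fact m) *\<^sub>R F (Suc m))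
        = - ((r ^ n / fact n) *\<^sub>R F (Suc n))"
proof (induction n)
  case 0 then show ?case by simp
next
  case (Suc n)
  have "real (Suc n) * r ^ n / fact (Suc n) = r ^ n / fact n"
    by (simp add: fact_Suc field_simps del: of_nat_Suc)
  then show ?case using Suc by (simp add: algebra_simps del: of_nat_Suc)
qed

lemma bounded_linear_suminf:
  fixes f :: "nat \<Rightarrow> 'a::real_normed_vector \<Rightarrow> 'b::banach"
  assumes bl: "\<And>m. bounded_linear (f m)" and sm: "summable (\<lambda>m. onorm (f m))"
  shows "bounded_linear (\<lambda>x. \<Sum>m. f m x)" "\<And>x. summable (\<lambda>m. f m x)"
proof -
  have nb: "norm (f m x) \<le> onorm (f m) * norm x" for m x using onorm bl by blast
  have smn: "summable (\<lambda>m. norm (f m x))" for x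
    by (rule summable_comparison_test[OF _ summable_mult2[OF sm, of "norm x"]]) (use nb in auto)
  show sx: "summable (\<lambda>m. f m x)" for x using summable_norm_cancel[OF smn] .
  show "bounded_linear (\<lambda>x. \<Sum>m. f m x)"
  proof (rule bounded_linear_intro[where K = "\<Sum>m. onorm (f m)"])
    fix x y
    show "(\<Sum>m. f m (x + y)) = (\<Sum>m. f m x) + (\<Sum>m. f m y)"
      using suminf_add[OF sx sx, of x y] bl by (simp add: linear_simps)
  next
    fix r x
    show "(\<Sum>m. f m (r *\<^sub>R x)) = r *\<^sub>R (\<Sum>m. f m x)"
      using suminf_scaleR_right[OF sx[of x], of r] bl by (simp add: linear_simps)
  next
    fix x
    have "norm (\<Sum>m. f m x) \<le> (\<Sum>m. norm (f m x))" using summable_norm[OF smn] .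
    also have "\<dots> \<le> (\<Sum>m. onorm (f m) * norm x)"
      by (rule suminf_le[OF nb smn summable_mult2[OF sm]])
    also have "\<dots> = norm x * (\<Sum>m. onorm (f m))"
      using suminf_mult2[OF sm, of "norm x"] by (simp add: mult.commute)
    finally show "norm (\<Sum>m. f m x) \<le> norm x * (\<Sum>m. onorm (f m))" .
  qed
qed

lemma power_div_fact_le_exp: "(x::real) \<ge> 0 \<Longrightarrow> x ^ n / fact n \<le> exp x"
proof -
  assume x: "x \<ge> 0"
  have s: "(\<lambda>n. x ^ n / fact n) sums exp x" using exp_converges[of x] by (simp add: divide_inverse_commute)
  have "sum (\<lambda>n. x ^ n / fact n) {n} \<le> (\<Sum>n. x ^ n / fact n)"
    by (rule sum_le_suminf) (use s x in \<open>auto simp: sums_iff\<close>)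
  then show ?thesis using s by (simp add: sums_iff)
qed

lemma eventually_less_if_mult_limsup_less_one:
  fixes f :: "nat \<Rightarrow> real"
  assumes c: "c > 0" and ls: "ereal c * limsup (\<lambda>m. ereal (f m)) < 1"
  obtains L where "0 < L" "L < 1 / c" "eventually (\<lambda>m. f m < L) sequentially"
proof -
  define Ls where "Ls = limsup (\<lambda>m. ereal (f m))"
  have "Ls < ereal (1 / c)"
  proof (cases Ls)
    case (real l)
    then have "c * l < 1" using ls by (simp add: Ls_def)
    then show ?thesis using real c by (simp add: field_simps)
  qed (use ls c in \<open>simp_all add: Ls_def\<close>)
  then obtain z where z: "Ls < ereal z" "z < 1 / c" using ereal_dense2 by fastforce
  define L where "L = max z (1 / (2 * c))"
  have "Ls < ereal L" using z(1) by (simp add: L_def less_le_trans)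
  then have "eventually (\<lambda>m. ereal (f m) < ereal L) sequentially"
    unfolding Ls_def by (rule Limsup_lessD)
  then have "eventually (\<lambda>m. f m < L) sequentially" by simp
  moreover have "0 < L" using c by (simp add: L_def less_max_iff_disj)
  moreover have "L < 1 / c" using z(2) c by (simp add: L_def field_simps)
  ultimately show ?thesis using that by blast
qed

text \<open>The factor 2e in the hypothesis compensates m^m/m! \<le> e^m.\<close>
lemma limsup_root_geometric_bound:
  fixes a :: "nat \<Rightarrow> real" and chi :: real
  assumes a: "\<And>m. a m \<ge> 0" and chi: "chi > 0"
    and ls: "ereal (2 * exp 1 * chi) * limsup (\<lambda>m. ereal (root m (a m) / real m)) < 1"
  shows "\<exists>q. 0 \<le> q \<and> q < 1 \<and> (\<exists>N. \<forall>m\<ge>N. (2 * chi) ^ m * a m / fact m \<le> q ^ m)"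
proof -
  define c where "c = 2 * exp 1 * chi"
  have c: "c > 0" using chi by (simp add: c_def)
  obtain L where L: "0 < L" "L < 1 / c" and "eventually (\<lambda>m. root m (a m) / real m < L) sequentially"
    using eventually_less_if_mult_limsup_less_one[OF c ls[folded c_def]] by blast
  then obtain N where N: "\<And>m. m \<ge> N \<Longrightarrow> root m (a m) / real m < L"
    unfolding eventually_sequentially by auto
  define q where "q = c * L"
  have q: "0 \<le> q" "q < 1" using L c by (auto simp: q_def field_simps)
  have "(2 * chi) ^ m * a m / fact m \<le> q ^ m" if m: "m \<ge> Suc N" for m
  proof -
    have m0: "m > 0" "m \<ge> N" using m by auto
    have "root m (a m) < L * real m" using N[OF m0(2)] m0 by (simp add: field_simps)
    then have "root m (a m) ^ m \<le> (L * real m) ^ m"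
      using a[of m] real_root_ge_zero[of "a m" m] by (intro power_mono) auto
    then have am: "a m \<le> (L * real m) ^ m" using real_root_pow_pos2[OF m0(1) a[of m]] by simp
    have "(2 * chi) ^ m * a m / fact m \<le> (2 * chi) ^ m * (L * real m) ^ m / fact m"
      using am chi by (intro divide_right_mono mult_left_mono) auto
    also have "\<dots> = (2 * chi * L) ^ m * (real m ^ m / fact m)"
      by (simp add: power_mult_distrib)
    also have "\<dots> \<le> (2 * chi * L) ^ m * exp (real m)"
      using power_div_fact_le_exp[of "real m" m] chi L by (intro mult_left_mono) auto
    also have "\<dots> = q ^ m"
      by (simp add: q_def c_def power_mult_distrib exp_of_nat_mult[symmetric] algebra_simps)
    finally show ?thesis .
  qed
  then show ?thesis using q by blast
qed

lemma exp_weighted_series_converges: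
  fixes a :: "nat \<Rightarrow> real" and chi \<sigma> :: real
  assumes a: "\<And>m. a m \<ge> 0" and chi: "chi \<ge> 0"
    and ls: "ereal (2 * exp 1 * chi) * limsup (\<lambda>m. ereal (root m (a m) / real m)) < 1"
    and \<sigma>: "0 \<le> \<sigma>" "\<sigma> \<le> 2 * chi"
  shows "summable (\<lambda>m. \<sigma> ^ m / fact m * a m)" "(\<lambda>n. \<sigma> ^ n / fact n * a (Suc n)) \<longlonglongrightarrow> 0"
proof -
  have "summable (\<lambda>m. \<sigma> ^ m / fact m * a m) \<and> (\<lambda>n. \<sigma> ^ n / fact n * a (Suc n)) \<longlonglongrightarrow> 0"
  proof (cases "chi = 0")
    case True
    then have s0: "\<sigma> = 0" using \<sigma> by simp
    have "summable (\<lambda>m. \<sigma> ^ m / fact m * a m)"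
      by (rule summable_comparison_test'[of "\<lambda>_. 0" 1]) (use s0 in \<open>simp_all add: power_0_left\<close>)
    moreover have "(\<lambda>n. \<sigma> ^ n / fact n * a (Suc n)) \<longlonglongrightarrow> 0"
      by (rule Lim_null_comparison[of _ "\<lambda>_. 0"]) (use s0 in \<open>auto simp: eventually_sequentially power_0_left intro!: exI[of _ 1]\<close>)
    ultimately show ?thesis by blast
  next
    case False
    then have chip: "chi > 0" using chi by simp
    obtain q N where q: "0 \<le> q" "q < 1" and N: "\<And>m. m \<ge> N \<Longrightarrow> (2 * chi) ^ m * a m / fact m \<le> q ^ m"
      using limsup_root_geometric_bound[OF a chip ls] by blast
    have pw: "\<sigma> ^ m \<le> (2 * chi) ^ m" for m using \<sigma> by (intro power_mono) auto
    have le: "\<sigma> ^ m / fact m * a m \<le> (2 * chi) ^ m * a m / fact m" for m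
    proof -
      have "\<sigma> ^ m * a m \<le> (2 * chi) ^ m * a m" using pw a[of m] by (rule mult_right_mono)
      then show ?thesis by (simp add: divide_right_mono)
    qed
    have "summable (\<lambda>m. \<sigma> ^ m / fact m * a m)"
    proof (rule summable_comparison_test'[OF summable_geometric[of q] ])
      show "norm q < 1" using q by simp
      fix m assume "m \<ge> N"
      then show "norm (\<sigma> ^ m / fact m * a m) \<le> q ^ m"
        using le[of m] N[of m] \<sigma> a[of m] by simp
    qed
    moreover have "(\<lambda>n. \<sigma> ^ n / fact n * a (Suc n)) \<longlonglongrightarrow> 0"
    proof (rule Lim_null_comparison)
      have "(\<lambda>n. real (Suc n) * q ^ Suc n) \<longlonglongrightarrow> 0"
        using LIMSEQ_Suc[OF powser_times_n_limit_0[of q]] q by simp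
      then show "(\<lambda>n. real (Suc n) * q ^ Suc n / (2 * chi)) \<longlonglongrightarrow> 0"
        using tendsto_divide_zero by blast
      have "norm (\<sigma> ^ n / fact n * a (Suc n)) \<le> real (Suc n) * q ^ Suc n / (2 * chi)" if n: "n \<ge> N" for n
      proof -
        have "norm (\<sigma> ^ n / fact n * a (Suc n)) = \<sigma> ^ n / fact n * a (Suc n)" using \<sigma> a by simp
        also have "\<dots> \<le> (2 * chi) ^ n / fact n * a (Suc n)"
          using pw[of n] a[of "Suc n"] by (intro mult_right_mono divide_right_mono) auto
        also have "\<dots> = real (Suc n) * ((2 * chi) ^ Suc n * a (Suc n) / fact (Suc n)) / (2 * chi)"
          using chip by (simp add: field_simps del: of_nat_Suc)
        also have "\<dots> \<le> real (Suc n) * q ^ Suc n / (2 * chi)"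
          using N[of "Suc n"] n chip by (intro divide_right_mono mult_left_mono) auto
        finally show ?thesis .
      qed
      then show "\<forall>\<^sub>F n in sequentially. norm (\<sigma> ^ n / fact n * a (Suc n)) \<le> real (Suc n) * q ^ Suc n / (2 * chi)"
        unfolding eventually_sequentially by blast
    qed
    ultimately show ?thesis by blast
  qed
  then show "summable (\<lambda>m. \<sigma> ^ m / fact m * a m)" "(\<lambda>n. \<sigma> ^ n / fact n * a (Suc n)) \<longlonglongrightarrow> 0" by auto
qed

text \<open>Ad and Aop are the domain and action of A, Cm m stands for {B,A^m}, and t0 for \<theta> - \<chi>max.\<close>
locale commutator_expansion = C0_semigroup T for T :: "real \<Rightarrow> 'a::banach \<Rightarrow> 'a" +
  fixes Ad :: "'a set" and Aop :: "'a \<Rightarrow> 'a" and Cm :: "nat \<Rightarrow> 'a \<Rightarrow> 'a" and t0 :: real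
  assumes generator: "\<And>x. x \<in> Ad \<Longrightarrow> generator_limit x (Aop x)"
    and Ad_T: "\<And>x t. x \<in> Ad \<Longrightarrow> t \<ge> 0 \<Longrightarrow> T t x \<in> Ad"
    and Aop_T: "\<And>x t. x \<in> Ad \<Longrightarrow> t \<ge> 0 \<Longrightarrow> Aop (T t x) = T t (Aop x)"
    and Ad_Cm: "\<And>x m. x \<in> Ad \<Longrightarrow> Cm m x \<in> Ad"
    and Cm_Suc: "\<And>x m. x \<in> Ad \<Longrightarrow> Cm (Suc m) x = Cm m (Aop x) - Aop (Cm m x)"
    and Ad_add: "\<And>x y. x \<in> Ad \<Longrightarrow> y \<in> Ad \<Longrightarrow> x + y \<in> Ad \<and> Aop (x + y) = Aop x + Aop y"
    and Ad_scaleR: "\<And>x c. x \<in> Ad \<Longrightarrow> c *\<^sub>R x \<in> Ad \<and> Aop (c *\<^sub>R x) = c *\<^sub>R Aop x"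
    and Ad_zero: "0 \<in> Ad"
    and t0: "t0 \<ge> 0"
    and bounded_linear_Cm_T: "\<And>m. bounded_linear (\<lambda>x. Cm m (T t0 x))"
begin

lemma Ad_sum:
  "finite I \<Longrightarrow> (\<And>i. i \<in> I \<Longrightarrow> f i \<in> Ad) \<Longrightarrow> sum f I \<in> Ad \<and> Aop (sum f I) = (\<Sum>i\<in>I. Aop (f i))"
proof (induction I rule: finite_induct)
  case empty
  then show ?case using Ad_scaleR[OF Ad_zero, of 0] by (simp add: Ad_zero)
next
  case (insert x F)
  then show ?case using Ad_add by simp
qed

lemma Cm_T_minus: "Cm m (T t0 (- x)) = - Cm m (T t0 x)"
  using bounded_linear_Cm_T[of m] bounded_linear.linear linear_neg by blast

text \<open>The truncated expansion r \<mapsto> \<Sum>m\<le>n r^m/m! {B,A^m} T_t0 T_(\<sigma>-r) w interpolates between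
  B T_t0 T_\<sigma> w at r = 0 and the n-th partial sum at r = \<sigma>; along the orbit r \<mapsto> T_r (\<dots>) the
  commutator relation makes the derivative telescope down to the last term.\<close>
definition expansion_partial :: "nat \<Rightarrow> real \<Rightarrow> 'a \<Rightarrow> real \<Rightarrow> 'a" where
  "expansion_partial n \<sigma> w r = (\<Sum>m<Suc n. (r ^ m / fact m) *\<^sub>R Cm m (T t0 (T (\<sigma> - r) w)))"

definition expansion_partial_deriv :: "nat \<Rightarrow> real \<Rightarrow> 'a \<Rightarrow> real \<Rightarrow> 'a" where
  "expansion_partial_deriv n \<sigma> w r =
     (\<Sum>m<Suc n. (real m * r ^ (m - 1) / fact m) *\<^sub>R Cm m (T t0 (T (\<sigma> - r) w))
                 - (r ^ m / fact m) *\<^sub>R Cm m (T t0 (T (\<sigma> - r) (Aop w))))"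

lemma backward_orbit_has_vector_derivative:
  assumes w: "w \<in> Ad" and r: "r \<in> {0..\<sigma>}"
  shows "((\<lambda>r. T (\<sigma> - r) w) has_vector_derivative - T (\<sigma> - r) (Aop w)) (at r within {0..\<sigma>})"
proof -
  have d1: "((\<lambda>r. \<sigma> - r) has_vector_derivative (-1)) (at r within {0..\<sigma>})"
    by (auto intro!: derivative_eq_intros)
  have "((\<lambda>s. T s w) has_vector_derivative T (\<sigma> - r) (Aop w)) (at (\<sigma> - r) within {0..})"
    using orbit_has_derivative[OF generator[OF w], of "\<sigma> - r"] r
    unfolding has_vector_derivative_def by simp
  then have "((\<lambda>s. T s w) has_vector_derivative T (\<sigma> - r) (Aop w))
      (at (\<sigma> - r) within (\<lambda>r. \<sigma> - r) ` {0..\<sigma>})"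
    by (rule has_vector_derivative_within_subset) auto
  from vector_diff_chain_within[OF d1 this] show ?thesis by (simp add: o_def)
qed

lemma expansion_partial_has_vector_derivative:
  assumes w: "w \<in> Ad" and r: "r \<in> {0..\<sigma>}"
  shows "(expansion_partial n \<sigma> w has_vector_derivative expansion_partial_deriv n \<sigma> w r)
           (at r within {0..\<sigma>})"
proof -
  have "((\<lambda>r. (r ^ m / fact m) *\<^sub>R Cm m (T t0 (T (\<sigma> - r) w))) has_vector_derivative
          (r ^ m / fact m) *\<^sub>R Cm m (T t0 (- T (\<sigma> - r) (Aop w)))
          + (real m * r ^ (m - 1) / fact m) *\<^sub>R Cm m (T t0 (T (\<sigma> - r) w))) (at r within {0..\<sigma>})"
    for m
  proof (rule has_vector_derivative_scaleR)
    show "((\<lambda>r. r ^ m / fact m) has_field_derivative real m * r ^ (m - 1) / fact m) (at r within {0..\<sigma>})"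
      using DERIV_cdivide[OF DERIV_pow[of m r], of "fact m"] by simp
    show "((\<lambda>r. Cm m (T t0 (T (\<sigma> - r) w))) has_vector_derivative Cm m (T t0 (- T (\<sigma> - r) (Aop w))))
        (at r within {0..\<sigma>})"
      using bounded_linear.has_vector_derivative[OF bounded_linear_Cm_T
          backward_orbit_has_vector_derivative[OF w r]] .
  qed
  then have "(expansion_partial n \<sigma> w has_vector_derivative
      (\<Sum>m<Suc n. (r ^ m / fact m) *\<^sub>R Cm m (T t0 (- T (\<sigma> - r) (Aop w)))
         + (real m * r ^ (m - 1) / fact m) *\<^sub>R Cm m (T t0 (T (\<sigma> - r) w)))) (at r within {0..\<sigma>})"
    unfolding expansion_partial_def[abs_def] by (intro has_vector_derivative_sum)
  then show ?thesis
    unfolding expansion_partial_deriv_def Cm_T_minus by (simp add: algebra_simps)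
qed

lemma expansion_partial_domain:
  assumes w: "w \<in> Ad" and r: "r \<le> \<sigma>"
  shows "expansion_partial n \<sigma> w r \<in> Ad \<and>
    Aop (expansion_partial n \<sigma> w r) = (\<Sum>m<Suc n. (r ^ m / fact m) *\<^sub>R Aop (Cm m (T t0 (T (\<sigma> - r) w))))"
proof -
  define y where "y = T t0 (T (\<sigma> - r) w)"
  have "y \<in> Ad" using Ad_T[OF Ad_T[OF w] t0] r by (simp add: y_def)
  then have "(r ^ m / fact m) *\<^sub>R Cm m y \<in> Ad \<and>
      Aop ((r ^ m / fact m) *\<^sub>R Cm m y) = (r ^ m / fact m) *\<^sub>R Aop (Cm m y)" for m
    using Ad_scaleR Ad_Cm by blast
  then show ?thesis
    using Ad_sum[of "{..<Suc n}" "\<lambda>m. (r ^ m / fact m) *\<^sub>R Cm m y"]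
    by (simp add: expansion_partial_def y_def[symmetric] del: sum.lessThan_Suc)
qed

lemma expansion_partial_telescopes:
  assumes w: "w \<in> Ad" and r: "r \<in> {0..\<sigma>}"
  shows "Aop (expansion_partial n \<sigma> w r) + expansion_partial_deriv n \<sigma> w r
           = - ((r ^ n / fact n) *\<^sub>R Cm (Suc n) (T t0 (T (\<sigma> - r) w)))"
proof -
  define y where "y = T t0 (T (\<sigma> - r) w)"
  define X where "X = T t0 (T (\<sigma> - r) (Aop w))"
  have y: "y \<in> Ad" using Ad_T[OF Ad_T[OF w] t0] r by (simp add: y_def)
  have "Aop y = X"
    using Aop_T[OF Ad_T[OF w, of "\<sigma> - r"] t0] Aop_T[OF w, of "\<sigma> - r"] r by (simp add: y_def X_def)
  then have Aop_Cm: "Aop (Cm m y) = Cm m X - Cm (Suc m) y" for m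
    using Cm_Suc[OF y, of m] by simp
  have "Aop (expansion_partial n \<sigma> w r) + expansion_partial_deriv n \<sigma> w r
      = (\<Sum>m<Suc n. (r ^ m / fact m) *\<^sub>R (Cm m X - Cm (Suc m) y)
           + ((real m * r ^ (m - 1) / fact m) *\<^sub>R Cm m y - (r ^ m / fact m) *\<^sub>R Cm m X))"
    using expansion_partial_domain[OF w, of r \<sigma> n] r
    unfolding expansion_partial_deriv_def y_def[symmetric] X_def[symmetric] Aop_Cm
    by (simp add: sum.distrib del: sum.lessThan_Suc)
  also have "\<dots> = (\<Sum>m<Suc n. (real m * r ^ (m - 1) / fact m) *\<^sub>R Cm m y - (r ^ m / fact m) *\<^sub>R Cm (Suc m) y)"
    by (rule sum.cong) (simp_all add: algebra_simps)
  also have "\<dots> = - ((r ^ n / fact n) *\<^sub>R Cm (Suc n) y)"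
    by (rule sum_exp_coefficients_telescope)
  finally show ?thesis by (simp add: y_def)
qed

lemma orbit_expansion_partial_has_vector_derivative:
  assumes w: "w \<in> Ad" and r: "r \<in> {0..\<sigma>}"
  shows "((\<lambda>s. T s (expansion_partial n \<sigma> w s)) has_vector_derivative
           - T r ((r ^ n / fact n) *\<^sub>R Cm (Suc n) (T t0 (T (\<sigma> - r) w)))) (at r within {0..\<sigma>})"
proof -
  have "generator_limit (expansion_partial n \<sigma> w r) (Aop (expansion_partial n \<sigma> w r))"
    using generator conjunct1[OF expansion_partial_domain[OF w]] r by simp
  from orbit_along_has_vector_derivative[OF expansion_partial_has_vector_derivative[OF w r] order_refl r this]
  show ?thesis
    using expansion_partial_telescopes[OF w r] r by (simp add: T_add[symmetric] T_minus)
qed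

lemma expansion_partial_error:
  assumes w: "w \<in> Ad" and \<sigma>: "\<sigma> \<ge> 0" and M: "\<And>s. 0 \<le> s \<and> s \<le> \<sigma> \<Longrightarrow> onorm (T s) \<le> M"
  shows "norm (T \<sigma> (\<Sum>m<Suc n. (\<sigma> ^ m / fact m) *\<^sub>R Cm m (T t0 w)) - Cm 0 (T t0 (T \<sigma> w)))
          \<le> M * M * (\<sigma> ^ n / fact n * onorm (\<lambda>x. Cm (Suc n) (T t0 x))) * norm w * \<sigma>"
proof -
  define k where "k = onorm (\<lambda>x. Cm (Suc n) (T t0 x))"
  define D where "D r = - T r ((r ^ n / fact n) *\<^sub>R Cm (Suc n) (T t0 (T (\<sigma> - r) w)))" for r
  have M0: "M \<ge> 0" using M[of 0] onorm_T_nonneg[of 0] \<sigma> by linarith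
  have D_bound: "norm (D r) \<le> M * M * (\<sigma> ^ n / fact n * k) * norm w" if r: "r \<in> {0..\<sigma>}" for r
  proof -
    have c: "0 \<le> r ^ n / fact n" "r ^ n / fact n \<le> \<sigma> ^ n / fact n"
      using r by (auto intro!: divide_right_mono power_mono)
    have k: "0 \<le> k" unfolding k_def using bounded_linear_Cm_T onorm_pos_le by blast
    have "norm (T (\<sigma> - r) w) \<le> onorm (T (\<sigma> - r)) * norm w" using norm_T_le r by simp
    also have "\<dots> \<le> M * norm w" using M[of "\<sigma> - r"] r by (intro mult_right_mono) auto
    finally have v: "norm (T (\<sigma> - r) w) \<le> M * norm w" .
    have "norm (D r) \<le> onorm (T r) * norm ((r ^ n / fact n) *\<^sub>R Cm (Suc n) (T t0 (T (\<sigma> - r) w)))"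
      unfolding D_def norm_minus_cancel using r by (intro norm_T_le) simp
    also have "\<dots> \<le> M * (r ^ n / fact n * (k * norm (T (\<sigma> - r) w)))"
      using M[of r] r c M0 onorm[OF bounded_linear_Cm_T[of "Suc n"], of "T (\<sigma> - r) w"]
      by (intro mult_mono) (auto simp: k_def intro!: mult_left_mono divide_right_mono)
    also have "\<dots> \<le> M * (\<sigma> ^ n / fact n * (k * (M * norm w)))"
      using M0 c k v by (intro mult_left_mono mult_mono) auto
    finally show ?thesis by (simp add: algebra_simps)
  qed
  have "norm (T \<sigma> (expansion_partial n \<sigma> w \<sigma>) - T 0 (expansion_partial n \<sigma> w 0))
      \<le> M * M * (\<sigma> ^ n / fact n * k) * norm w * norm (\<sigma> - 0)"
  proof (rule differentiable_bound[where f' = "\<lambda>r h. h *\<^sub>R D r"])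
    fix x assume x: "x \<in> {0..\<sigma>}"
    show "((\<lambda>s. T s (expansion_partial n \<sigma> w s)) has_derivative (\<lambda>h. h *\<^sub>R D x)) (at x within {0..\<sigma>})"
      using orbit_expansion_partial_has_vector_derivative[OF w x]
      unfolding has_vector_derivative_def D_def .
    show "onorm (\<lambda>h. h *\<^sub>R D x) \<le> M * M * (\<sigma> ^ n / fact n * k) * norm w"
      using D_bound[OF x] onorm_scaleR_left[OF bounded_linear_ident, of "D x"] by (simp add: onorm_id)
  qed (use \<sigma> in auto)
  moreover have "expansion_partial n \<sigma> w \<sigma> = (\<Sum>m<Suc n. (\<sigma> ^ m / fact m) *\<^sub>R Cm m (T t0 w))"
    by (simp add: expansion_partial_def T0)
  moreover have "expansion_partial n \<sigma> w 0 = Cm 0 (T t0 (T \<sigma> w))"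
    by (simp add: expansion_partial_def sum.lessThan_Suc_shift del: sum.lessThan_Suc)
  ultimately show ?thesis using \<sigma> by (simp add: T0 k_def)
qed

lemma expansion_on_domain:
  assumes w: "w \<in> Ad" and \<sigma>: "\<sigma> \<ge> 0"
    and sm: "summable (\<lambda>m. \<sigma> ^ m / fact m * onorm (\<lambda>x. Cm m (T t0 x)))"
    and lim: "(\<lambda>n. \<sigma> ^ n / fact n * onorm (\<lambda>x. Cm (Suc n) (T t0 x))) \<longlonglongrightarrow> 0"
  shows "Cm 0 (T t0 (T \<sigma> w)) = T \<sigma> (Cm 0 (T t0 w) + (\<Sum>m. (\<sigma> ^ Suc m / fact (Suc m)) *\<^sub>R Cm (Suc m) (T t0 w)))"
proof -
  obtain M where M: "M > 0" "\<And>s. 0 \<le> s \<and> s \<le> \<sigma> \<Longrightarrow> onorm (T s) \<le> M" using onorm_bounded_on_interval by blast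
  define f where "f m = (\<sigma> ^ m / fact m) *\<^sub>R Cm m (T t0 w)" for m
  have summable_f: "summable f"
  proof (rule summable_comparison_test[OF _ summable_mult2[OF sm, of "norm w"]])
    have "norm (f m) \<le> \<sigma> ^ m / fact m * onorm (\<lambda>x. Cm m (T t0 x)) * norm w" for m
      using onorm[OF bounded_linear_Cm_T[of m], of w] \<sigma> unfolding f_def
      by (simp add: mult.assoc mult_left_mono divide_right_mono)
    then show "\<exists>N. \<forall>n\<ge>N. norm (f n) \<le> \<sigma> ^ n / fact n * onorm (\<lambda>x. Cm n (T t0 x)) * norm w" by blast
  qed
  have partial_sums: "(\<lambda>n. \<Sum>m<Suc n. f m) \<longlonglongrightarrow> suminf f"
    using LIMSEQ_Suc[OF summable_LIMSEQ[OF summable_f]] .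
  have sum_split: "suminf f = Cm 0 (T t0 w) + (\<Sum>m. (\<sigma> ^ Suc m / fact (Suc m)) *\<^sub>R Cm (Suc m) (T t0 w))"
    using suminf_split_head[OF summable_f] by (simp add: f_def)
  have image_limit: "(\<lambda>n. T \<sigma> (\<Sum>m<Suc n. f m)) \<longlonglongrightarrow> T \<sigma> (suminf f)"
    using bounded_linear.tendsto[OF bounded_linear_T[OF \<sigma>] partial_sums] .
  have error_null: "(\<lambda>n. T \<sigma> (\<Sum>m<Suc n. f m) - Cm 0 (T t0 (T \<sigma> w))) \<longlonglongrightarrow> 0"
  proof (rule Lim_null_comparison)
    show "\<forall>\<^sub>F n in sequentially. norm (T \<sigma> (\<Sum>m<Suc n. f m) - Cm 0 (T t0 (T \<sigma> w)))
        \<le> M * M * (\<sigma> ^ n / fact n * onorm (\<lambda>x. Cm (Suc n) (T t0 x))) * norm w * \<sigma>"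
      using expansion_partial_error[OF w \<sigma> M(2)] unfolding f_def by simp
    show "(\<lambda>n. M * M * (\<sigma> ^ n / fact n * onorm (\<lambda>x. Cm (Suc n) (T t0 x))) * norm w * \<sigma>) \<longlonglongrightarrow> 0"
      using tendsto_mult_left_zero[OF tendsto_mult_left_zero[OF tendsto_mult_right_zero[OF lim, of "M * M"]], of "norm w" \<sigma>]
      by (simp add: mult.assoc)
  qed
  then have "(\<lambda>n. T \<sigma> (\<Sum>m<Suc n. f m)) \<longlonglongrightarrow> Cm 0 (T t0 (T \<sigma> w))"
    using Lim_transform2 tendsto_const by (metis (no_types) LIM_zero_cancel)
  with image_limit have "T \<sigma> (suminf f) = Cm 0 (T t0 (T \<sigma> w))" using LIMSEQ_unique by blast
  then show ?thesis using sum_split by simp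
qed

lemma bounded_linear_expansion_tail:
  assumes \<sigma>: "\<sigma> \<ge> 0" and sm: "summable (\<lambda>m. \<sigma> ^ m / fact m * onorm (\<lambda>x. Cm m (T t0 x)))"
  shows "bounded_linear (\<lambda>w. \<Sum>m. (\<sigma> ^ Suc m / fact (Suc m)) *\<^sub>R Cm (Suc m) (T t0 w))"
    "\<And>w. summable (\<lambda>m. (\<sigma> ^ Suc m / fact (Suc m)) *\<^sub>R Cm (Suc m) (T t0 w))"
proof -
  define f where "f m = (\<lambda>x. (\<sigma> ^ Suc m / fact (Suc m)) *\<^sub>R Cm (Suc m) (T t0 x))" for m
  have blf: "bounded_linear (f m)" for m
    unfolding f_def using bounded_linear_compose[OF bounded_linear_scaleR_right bounded_linear_Cm_T[of "Suc m"]] by (simp add: o_def)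
  have on: "onorm (f m) = \<sigma> ^ Suc m / fact (Suc m) * onorm (\<lambda>x. Cm (Suc m) (T t0 x))" for m
    unfolding f_def using onorm_scaleR[OF bounded_linear_Cm_T[of "Suc m"], of "\<sigma> ^ Suc m / fact (Suc m)"] \<sigma> by simp
  have "summable (\<lambda>m. onorm (f m))"
    unfolding on using sm summable_Suc_iff[of "\<lambda>m. \<sigma> ^ m / fact m * onorm (\<lambda>x. Cm m (T t0 x))"] by simp
  from bounded_linear_suminf[OF blf this]
  show "bounded_linear (\<lambda>w. \<Sum>m. (\<sigma> ^ Suc m / fact (Suc m)) *\<^sub>R Cm (Suc m) (T t0 w))"
    "\<And>w. summable (\<lambda>m. (\<sigma> ^ Suc m / fact (Suc m)) *\<^sub>R Cm (Suc m) (T t0 w))"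
    unfolding f_def by auto
qed

lemma jump_expansion:
  assumes dense: "closure Ad = UNIV" and \<sigma>: "\<sigma> \<ge> 0"
    and sm: "summable (\<lambda>m. \<sigma> ^ m / fact m * onorm (\<lambda>x. Cm m (T t0 x)))"
    and lim: "(\<lambda>n. \<sigma> ^ n / fact n * onorm (\<lambda>x. Cm (Suc n) (T t0 x))) \<longlonglongrightarrow> 0"
  shows "Cm 0 (T t0 (T \<sigma> w)) = T \<sigma> (Cm 0 (T t0 w) + (\<Sum>m. (\<sigma> ^ Suc m / fact (Suc m)) *\<^sub>R Cm (Suc m) (T t0 w)))"
proof -
  define L where "L w = Cm 0 (T t0 (T \<sigma> w))" for w
  define R where "R w = T \<sigma> (Cm 0 (T t0 w) + (\<Sum>m. (\<sigma> ^ Suc m / fact (Suc m)) *\<^sub>R Cm (Suc m) (T t0 w)))" for w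
  have blL: "bounded_linear L"
    using bounded_linear_compose[OF bounded_linear_Cm_T[of 0] bounded_linear_T[OF \<sigma>]] by (simp add: L_def[abs_def] o_def)
  have blR: "bounded_linear R"
    using bounded_linear_compose[OF bounded_linear_T[OF \<sigma>] bounded_linear_add[OF bounded_linear_Cm_T[of 0] bounded_linear_expansion_tail(1)[OF \<sigma> sm]]]
    by (simp add: R_def[abs_def] o_def)
  have "closed {w. L w = R w}"
    by (intro closed_Collect_eq linear_continuous_on blL blR)
  moreover have "Ad \<subseteq> {w. L w = R w}"
    using expansion_on_domain[OF _ \<sigma> sm lim] by (auto simp: L_def R_def)
  ultimately have "closure Ad \<subseteq> {w. L w = R w}" by (rule closure_minimal[rotated])
  then show ?thesis using dense by (auto simp: L_def R_def)
qed

lemma jump_expansion_under_limsup: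
  assumes dense: "closure Ad = UNIV" and \<chi>max: "\<chi>max \<ge> 0"
    and limsup: "ereal (2 * exp 1 * \<chi>max) *
      limsup (\<lambda>m. ereal (root m (onorm (\<lambda>x. Cm m (T t0 x))) / real m)) < 1"
    and s: "0 \<le> s" "s \<le> 2 * \<chi>max"
  shows "Cm 0 (T (s + t0) w) = T s (Cm 0 (T t0 w) + (\<Sum>m. (s ^ Suc m / fact (Suc m)) *\<^sub>R Cm (Suc m) (T t0 w)))"
    and "bounded_linear (\<lambda>w. Cm 0 (T t0 w) + (\<Sum>m. (s ^ Suc m / fact (Suc m)) *\<^sub>R Cm (Suc m) (T t0 w)))"
proof -
  have a: "0 \<le> onorm (\<lambda>x. Cm m (T t0 x))" for m
    using bounded_linear_Cm_T onorm_pos_le by blast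
  note series = exp_weighted_series_converges[OF a \<chi>max limsup s]
  show "Cm 0 (T (s + t0) w) = T s (Cm 0 (T t0 w) + (\<Sum>m. (s ^ Suc m / fact (Suc m)) *\<^sub>R Cm (Suc m) (T t0 w)))"
    using jump_expansion[OF dense s(1) series] T_add_apply[of t0 s] t0 s by (simp add: add.commute)
  show "bounded_linear (\<lambda>w. Cm 0 (T t0 w) + (\<Sum>m. (s ^ Suc m / fact (Suc m)) *\<^sub>R Cm (Suc m) (T t0 w)))"
    using bounded_linear_add[OF bounded_linear_Cm_T bounded_linear_expansion_tail(1)[OF s(1) series(1)]] .
qed

end

lemma is_closure_of_app:
  assumes "is_closure_of G H" "x \<in> fst H"
  shows "app G x = snd H x"
proof -
  have "(x, snd H x) \<in> graph H" using assms(2) by (auto simp: graph_def dom_def app_def)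
  then have "(x, snd H x) \<in> graph G" using assms(1) closure_subset unfolding is_closure_of_def by blast
  then show ?thesis by (auto simp: graph_def)
qed

lemma imp_sol_between_jumps:
  assumes sm: "strict_mono tau" and t: "tau k < t" "t \<le> tau (Suc k)"
  shows "imp_sol T tau J x t = T (t - tau k) (post T tau J x k)"
proof -
  have mono: "mono tau" using sm strict_mono_mono by blast
  have t0: "\<not> t \<le> tau 0" using t mono[unfolded mono_def, rule_format, of 0 k] by auto
  have "(LEAST k. t \<le> tau (Suc k)) = k"
  proof (rule Least_equality)
    show "t \<le> tau (Suc k)" using t by simp
    fix y assume y: "t \<le> tau (Suc y)"
    show "k \<le> y"
    proof (rule ccontr)
      assume "\<not> k \<le> y"
      then have "Suc y \<le> k" by simp
      then have "tau (Suc y) \<le> tau k" using mono by (simp add: monoD)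
      then show False using y t by simp
    qed
  qed
  then show ?thesis using t0 by (simp add: imp_sol_def Let_def)
qed

lemma imp_sol_before_start:
  assumes "t \<le> tau 0" shows "imp_sol T tau J x t = x"
  using assms by (simp add: imp_sol_def)

lemma jump_interval_exists:
  fixes tau :: "nat \<Rightarrow> real"
  assumes sm: "strict_mono tau" and t: "tau 0 < t" and ex: "\<exists>n. t \<le> tau n"
  shows "\<exists>k. tau k < t \<and> t \<le> tau (Suc k)"
proof -
  define n where "n = (LEAST n. t \<le> tau n)"
  have n: "t \<le> tau n" using ex LeastI_ex unfolding n_def by metis
  have "n \<noteq> 0"
  proof
    assume "n = 0" then show False using n t by simp
  qed
  then obtain k where k: "n = Suc k" using not0_implies_Suc by blast
  have "\<not> t \<le> tau k" using not_less_Least[of k "\<lambda>n. t \<le> tau n"] k unfolding n_def by simp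
  then have "tau k < t" by simp
  then show ?thesis using n k by blast
qed

lemma bounded_linear_post:
  assumes "\<And>k. bounded_linear (\<lambda>x. J (Suc k) (T (tau (Suc k) - tau k) x))"
  shows "bounded_linear (\<lambda>x. post T tau J x k)"
proof (induction k)
  case 0 then show ?case by (simp add: bounded_linear_ident)
next
  case (Suc k)
  then show ?case using bounded_linear_compose[OF assms[of k] Suc] by (simp add: o_def)
qed

lemma bounded_linear_imp_sol:
  assumes bl: "\<And>t. t \<ge> 0 \<Longrightarrow> bounded_linear (T t)" and sm: "strict_mono tau"
    and pbl: "\<And>k. bounded_linear (\<lambda>x. post T tau J x k)"
    and ex: "\<exists>n. t \<le> tau n"
  shows "bounded_linear (\<lambda>x. imp_sol T tau J x t)"
proof (cases "t \<le> tau 0")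
  case True then show ?thesis by (simp add: imp_sol_before_start bounded_linear_ident)
next
  case False
  then obtain k where k: "tau k < t" "t \<le> tau (Suc k)" using jump_interval_exists[OF sm _ ex] by force
  have "(\<lambda>x. imp_sol T tau J x t) = T (t - tau k) \<circ> (\<lambda>x. post T tau J x k)"
    by (simp add: fun_eq_iff imp_sol_between_jumps[OF sm k])
  moreover have "bounded_linear (T (t - tau k) \<circ> (\<lambda>x. post T tau J x k))"
    using bounded_linear_compose[OF bl[of "t - tau k"] pbl[of k]] k by (simp add: o_def)
  ultimately show ?thesis by simp
qed
lemma uniform_bound_extends_from_dense:
  fixes F :: "'a::real_normed_vector \<Rightarrow> real \<Rightarrow> 'b::real_normed_vector"
  assumes bl: "\<And>t. bounded_linear (\<lambda>z. F z t)" and dense: "closure D = UNIV"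
    and bound: "\<forall>\<epsilon>>0. \<exists>\<delta>>0. \<forall>z\<in>D. norm z < \<delta> \<longrightarrow> (\<forall>t\<ge>t0. norm (F z t) < \<epsilon>)"
  shows "\<forall>\<epsilon>>0. \<exists>\<delta>>0. \<forall>z. norm z < \<delta> \<longrightarrow> (\<forall>t\<ge>t0. norm (F z t) \<le> \<epsilon>)"
proof (intro allI impI)
  fix \<epsilon> :: real assume "\<epsilon> > 0"
  then obtain \<delta> where \<delta>: "\<delta> > 0" "\<And>z t. z \<in> D \<Longrightarrow> norm z < \<delta> \<Longrightarrow> t \<ge> t0 \<Longrightarrow> norm (F z t) < \<epsilon>"
    using bound by blast
  have "norm (F z t) \<le> \<epsilon>" if z: "norm z < \<delta>" and t: "t \<ge> t0" for z t
  proof -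
    have "closed {z. norm (F z t) \<le> \<epsilon>}"
      by (intro closed_Collect_le continuous_intros linear_continuous_on[OF bl])
    moreover have "ball 0 \<delta> \<inter> D \<subseteq> {z. norm (F z t) \<le> \<epsilon>}" using \<delta> t by (auto simp: less_imp_le)
    ultimately have "closure (ball 0 \<delta> \<inter> D) \<subseteq> {z. norm (F z t) \<le> \<epsilon>}"
      by (simp add: closure_minimal)
    moreover have "ball 0 \<delta> \<inter> closure D \<subseteq> closure (ball 0 \<delta> \<inter> D)"
      by (rule open_Int_closure_subset) simp
    ultimately show ?thesis using z dense by auto
  qed
  then show "\<exists>\<delta>>0. \<forall>z. norm z < \<delta> \<longrightarrow> (\<forall>t\<ge>t0. norm (F z t) \<le> \<epsilon>)" using \<delta>(1) by blast
qed

lemma tendsto_zero_extends_from_dense: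
  fixes F :: "'a::real_normed_vector \<Rightarrow> real \<Rightarrow> 'b::real_normed_vector"
  assumes bl: "\<And>t. bounded_linear (\<lambda>z. F z t)" and dense: "closure D = UNIV"
    and bound: "\<forall>\<epsilon>>0. \<exists>\<delta>>0. \<forall>z. norm z < \<delta> \<longrightarrow> (\<forall>t\<ge>t0. norm (F z t) \<le> \<epsilon>)"
    and lim: "\<forall>z\<in>D. ((\<lambda>t. F z t) \<longlongrightarrow> 0) at_top"
  shows "((\<lambda>t. F z t) \<longlongrightarrow> 0) at_top"
proof (rule tendstoI)
  fix \<epsilon> :: real assume e: "\<epsilon> > 0"
  then obtain \<delta> where \<delta>: "\<delta> > 0" "\<And>z t. norm z < \<delta> \<Longrightarrow> t \<ge> t0 \<Longrightarrow> norm (F z t) \<le> \<epsilon> / 3"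
    using bound[rule_format, of "\<epsilon> / 3"] by auto
  obtain w where w: "w \<in> D" "dist w z < \<delta>"
    using closure_approachable \<delta>(1) dense by blast
  have "eventually (\<lambda>t. dist (F w t) 0 < \<epsilon> / 3) at_top"
    using tendstoD[OF lim[rule_format, OF w(1)], of "\<epsilon> / 3"] e by simp
  moreover have "eventually (\<lambda>t. t \<ge> t0) at_top" by (rule eventually_ge_at_top)
  ultimately show "eventually (\<lambda>t. dist (F z t) 0 < \<epsilon>) at_top"
  proof eventually_elim
    case (elim t)
    have "F z t = F w t + F (z - w) t"
      using linear_diff[OF bounded_linear.linear[OF bl[of t]], of z w] by simp
    moreover have "norm (F (z - w) t) \<le> \<epsilon> / 3"
      using \<delta>(2)[of "z - w" t] w(2) elim by (simp add: dist_norm norm_minus_commute)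
    ultimately have "norm (F z t) \<le> norm (F w t) + \<epsilon> / 3"
      using norm_triangle_ineq[of "F w t" "F (z - w) t"] by simp
    then show ?case using elim e by simp
  qed
qed

text \<open>\<sigma> k is the delay of the k-th jump time behind the grid point k\<theta>, shifted into [0, 2\<chi>max];
  jump is the identity B T_(\<sigma>+\<theta>-\<chi>max) = T_\<sigma> G T_(\<theta>-\<chi>max) provided by the commutator expansion.\<close>
locale dwell_comparison = C0_semigroup T for T :: "real \<Rightarrow> 'a::banach \<Rightarrow> 'a" +
  fixes B :: "'a \<Rightarrow> 'a" and G :: "nat \<Rightarrow> 'a \<Rightarrow> 'a" and tau :: "nat \<Rightarrow> real"
    and \<theta> \<chi>max :: real and \<sigma> :: "nat \<Rightarrow> real"
  assumes tau_mono: "strict_mono tau"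
    and \<theta>: "\<theta> > 0" and \<chi>max: "0 \<le> \<chi>max" "\<chi>max < \<theta>"
    and dwell: "\<And>k. \<bar>tau k - tau 0 - real k * \<theta>\<bar> \<le> \<chi>max"
    and \<sigma>_def: "\<And>k. \<sigma> k = \<chi>max + (tau k - tau 0 - real k * \<theta>)"
    and jump: "\<And>k w. B (T (\<sigma> (Suc k) + (\<theta> - \<chi>max)) w) = T (\<sigma> (Suc k)) (G k (T (\<theta> - \<chi>max) w))"
    and bounded_linear_G: "\<And>k. bounded_linear (\<lambda>x. G k (T (\<theta> - \<chi>max) x))"
begin

abbreviation x_sol :: "'a \<Rightarrow> real \<Rightarrow> 'a" where
  "x_sol x0 \<equiv> imp_sol T tau (\<lambda>k. B) x0"

abbreviation z_sol :: "'a \<Rightarrow> real \<Rightarrow> 'a" where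
  "z_sol z \<equiv> imp_sol T (\<lambda>k. real k * \<theta>) G z"

abbreviation z_init :: "'a \<Rightarrow> 'a" where
  "z_init x0 \<equiv> G 0 (T (\<theta> - \<chi>max) x0)"

lemma \<sigma>_bounds: "0 \<le> \<sigma> k" "\<sigma> k \<le> 2 * \<chi>max"
  using dwell[of k] by (simp_all add: \<sigma>_def abs_le_iff)

lemma grid_mono: "strict_mono (\<lambda>k. real k * \<theta>)"
  using \<theta> by (simp add: strict_mono_def)

lemma grid_unbounded: "\<exists>n. t \<le> real n * \<theta>"
proof -
  obtain n :: nat where "t / \<theta> < real n" using reals_Archimedean2 by blast
  then show ?thesis using \<theta> by (intro exI[of _ n]) (simp add: divide_less_eq)
qed

lemma tau_unbounded: "\<exists>n. t \<le> tau n"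
proof -
  obtain n where "t - tau 0 + \<chi>max \<le> real n * \<theta>" using grid_unbounded by blast
  then show ?thesis using dwell[of n] by (intro exI[of _ n]) (simp add: abs_le_iff)
qed

lemma T_\<theta>: "T (\<theta> - \<chi>max) (T \<chi>max q) = T \<theta> q"
  using T_add_apply[of "\<theta> - \<chi>max" \<chi>max] \<chi>max by simp

lemma bounded_linear_z_sol: "bounded_linear (\<lambda>z. z_sol z t)"
proof (rule bounded_linear_imp_sol[OF bounded_linear_T grid_mono _ grid_unbounded])
  have "bounded_linear (\<lambda>x. G k (T \<theta> x))" for k
    using bounded_linear_compose[OF bounded_linear_G bounded_linear_T[OF \<chi>max(1)]] by (simp add: T_\<theta>)
  then show "bounded_linear (\<lambda>x. post T (\<lambda>k. real k * \<theta>) G x k)" for k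
    by (intro bounded_linear_post) (simp add: algebra_simps)
qed

lemma post_eq_comparison_post:
  "post T tau (\<lambda>k. B) x0 (Suc j) = T (\<sigma> (Suc j)) (post T (\<lambda>k. real k * \<theta>) G (z_init x0) j)"
proof (induction j)
  case 0
  have "tau (Suc 0) - tau 0 = \<sigma> (Suc 0) + (\<theta> - \<chi>max)" by (simp add: \<sigma>_def)
  then show ?case using jump[of 0 x0] by simp
next
  case (Suc j)
  let ?Q = "post T (\<lambda>k. real k * \<theta>) G (z_init x0) j"
  have step: "tau (Suc (Suc j)) - tau (Suc j) \<ge> 0"
    using tau_mono by (simp add: strict_mono_def less_imp_le)
  have shift: "tau (Suc (Suc j)) - tau (Suc j) + \<sigma> (Suc j) = \<sigma> (Suc (Suc j)) + (\<theta> - \<chi>max) + \<chi>max"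
    by (simp add: \<sigma>_def algebra_simps)
  have "T (tau (Suc (Suc j)) - tau (Suc j)) (T (\<sigma> (Suc j)) ?Q)
      = T (tau (Suc (Suc j)) - tau (Suc j) + \<sigma> (Suc j)) ?Q"
    by (rule T_add_apply[OF step \<sigma>_bounds(1), symmetric])
  also have "\<dots> = T (\<sigma> (Suc (Suc j)) + (\<theta> - \<chi>max) + \<chi>max) ?Q"
    by (simp only: shift)
  also have "\<dots> = T (\<sigma> (Suc (Suc j)) + (\<theta> - \<chi>max)) (T \<chi>max ?Q)"
    by (rule T_add_apply) (use \<sigma>_bounds(1)[of "Suc (Suc j)"] \<chi>max in auto)
  finally have "post T tau (\<lambda>k. B) x0 (Suc (Suc j)) = B (T (\<sigma> (Suc (Suc j)) + (\<theta> - \<chi>max)) (T \<chi>max ?Q))"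
    using Suc by simp
  also have "\<dots> = T (\<sigma> (Suc (Suc j))) (G (Suc j) (T \<theta> ?Q))"
    using jump[of "Suc j" "T \<chi>max ?Q"] by (simp add: T_\<theta>)
  finally show ?case by (simp add: algebra_simps)
qed

lemma x_sol_first_interval:
  assumes "tau 0 < t" "t \<le> tau (Suc 0)"
  shows "x_sol x0 t = T (t - tau 0) x0" and "t - tau 0 \<le> \<theta> + 2 * \<chi>max"
  using imp_sol_between_jumps[OF tau_mono, of 0 t] assms dwell[of 1] \<chi>max by (auto simp: abs_le_iff)

lemma x_sol_via_z_sol:
  assumes t: "tau (Suc j) < t" "t \<le> tau (Suc (Suc j))"
  obtains s r where "0 \<le> s" "t - tau 0 - 2 * \<theta> - \<chi>max \<le> s" "0 \<le> r" "r \<le> \<theta> + 2 * \<chi>max"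
    "x_sol x0 t = T r (z_sol (z_init x0) s)"
proof -
  let ?Q = "post T (\<lambda>k. real k * \<theta>) G (z_init x0) j"
  define \<rho> where "\<rho> = t - tau (Suc j) + \<sigma> (Suc j)"
  have \<rho>: "0 < \<rho>" "\<rho> \<le> \<theta> + 2 * \<chi>max"
    using t \<sigma>_bounds[of "Suc j"] \<sigma>_bounds[of "Suc (Suc j)"]
    by (auto simp: \<rho>_def \<sigma>_def algebra_simps)
  have "x_sol x0 t = T (t - tau (Suc j)) (T (\<sigma> (Suc j)) ?Q)"
    using imp_sol_between_jumps[OF tau_mono t, of T "\<lambda>k. B" x0]
    by (simp only: post_eq_comparison_post)
  then have x: "x_sol x0 t = T \<rho> ?Q"
    using T_add_apply[of "t - tau (Suc j)" "\<sigma> (Suc j)"] t \<sigma>_bounds(1)[of "Suc j"]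
    by (simp add: \<rho>_def)
  have lag: "t - tau 0 - 2 * \<theta> - \<chi>max \<le> real j * \<theta>"
    using t dwell[of "Suc (Suc j)"] by (simp add: abs_le_iff algebra_simps)
  show ?thesis
  proof (cases "\<rho> \<le> \<theta>")
    case True
    have "z_sol (z_init x0) (real j * \<theta> + \<rho>) = T \<rho> ?Q"
      using imp_sol_between_jumps[OF grid_mono, of j "real j * \<theta> + \<rho>"] \<rho> True
      by (simp add: algebra_simps)
    then show ?thesis
      using that[of "real j * \<theta> + \<rho>" 0] x lag \<rho> \<theta> by (simp add: T0)
  next
    case False
    have "z_sol (z_init x0) (real (Suc j) * \<theta>) = T \<theta> ?Q"
      using imp_sol_between_jumps[OF grid_mono, of j "real (Suc j) * \<theta>"] \<theta>
      by (simp add: algebra_simps)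
    moreover have "T \<rho> ?Q = T (\<rho> - \<theta>) (T \<theta> ?Q)"
      using T_add_apply[of "\<rho> - \<theta>" \<theta>] False \<theta> by simp
    ultimately show ?thesis
      using that[of "real (Suc j) * \<theta>" "\<rho> - \<theta>"] x lag \<rho> \<theta> False by (simp add: algebra_simps)
  qed
qed

lemma x_sol_dominated:
  obtains M where "M \<ge> 1"
    and "\<And>x0 t. tau 0 < t \<Longrightarrow> t \<le> tau (Suc 0) \<Longrightarrow> norm (x_sol x0 t) \<le> M * norm x0"
    and "\<And>x0 t. tau (Suc 0) < t \<Longrightarrow>
           \<exists>s\<ge>0. t - tau 0 - 2 * \<theta> - \<chi>max \<le> s \<and> norm (x_sol x0 t) \<le> M * norm (z_sol (z_init x0) s)"
proof -
  obtain M where M: "M \<ge> 1" "\<And>r y. 0 \<le> r \<Longrightarrow> r \<le> \<theta> + 2 * \<chi>max \<Longrightarrow> norm (T r y) \<le> M * norm y"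
    using norm_T_bounded_on_interval by blast
  show ?thesis
  proof (rule that[OF M(1)])
    show "norm (x_sol x0 t) \<le> M * norm x0" if "tau 0 < t" "t \<le> tau (Suc 0)" for x0 t
      using x_sol_first_interval[OF that] M(2) that by simp
    show "\<exists>s\<ge>0. t - tau 0 - 2 * \<theta> - \<chi>max \<le> s \<and> norm (x_sol x0 t) \<le> M * norm (z_sol (z_init x0) s)"
      if t: "tau (Suc 0) < t" for x0 t
    proof -
      have "tau 0 < tau (Suc 0)" using tau_mono by (simp add: strict_mono_def)
      with t obtain k where k: "tau k < t" "t \<le> tau (Suc k)"
        using jump_interval_exists[OF tau_mono _ tau_unbounded] by (meson less_trans)
      then obtain j where "k = Suc j"
        using t by (cases k) auto
      with k obtain s r where "0 \<le> s" "t - tau 0 - 2 * \<theta> - \<chi>max \<le> s" "0 \<le> r" "r \<le> \<theta> + 2 * \<chi>max"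
        "x_sol x0 t = T r (z_sol (z_init x0) s)"
        using x_sol_via_z_sol by metis
      then show ?thesis using M(2) by metis
    qed
  qed
qed

lemma x_sol_stable:
  assumes z_stable: "\<forall>\<epsilon>>0. \<exists>\<delta>>0. \<forall>z. norm z < \<delta> \<longrightarrow> (\<forall>s\<ge>0. norm (z_sol z s) \<le> \<epsilon>)"
    and \<epsilon>: "\<epsilon> > 0"
  shows "\<exists>\<delta>>0. \<forall>x0. norm x0 < \<delta> \<longrightarrow> (\<forall>t\<ge>tau 0. norm (x_sol x0 t) < \<epsilon>)"
proof -
  obtain M where M: "M \<ge> 1"
    and first: "\<And>x0 t. tau 0 < t \<Longrightarrow> t \<le> tau (Suc 0) \<Longrightarrow> norm (x_sol x0 t) \<le> M * norm x0"
    and later: "\<And>x0 t. tau (Suc 0) < t \<Longrightarrow>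
      \<exists>s\<ge>0. t - tau 0 - 2 * \<theta> - \<chi>max \<le> s \<and> norm (x_sol x0 t) \<le> M * norm (z_sol (z_init x0) s)"
    by (rule x_sol_dominated) (rule that)
  obtain K where K: "K > 0" "\<And>x. norm (z_init x) \<le> norm x * K"
    using bounded_linear.pos_bounded[OF bounded_linear_G[of 0]] by blast
  have "\<epsilon> / (2 * M) > 0" using \<epsilon> M by simp
  then obtain \<delta>' where \<delta>': "\<delta>' > 0" "\<And>z s. norm z < \<delta>' \<Longrightarrow> s \<ge> 0 \<Longrightarrow> norm (z_sol z s) \<le> \<epsilon> / (2 * M)"
    using z_stable by blast
  define \<delta> where "\<delta> = min (\<delta>' / K) (\<epsilon> / (2 * M))"
  have "norm (x_sol x0 t) < \<epsilon>" if x0: "norm x0 < \<delta>" and t: "t \<ge> tau 0" for x0 t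
  proof -
    have "norm x0 < \<epsilon> / (2 * M)" using x0 by (simp add: \<delta>_def)
    then have "M * norm x0 < M * (\<epsilon> / (2 * M))" using M by (intro mult_strict_left_mono) auto
    then have x0_small: "M * norm x0 < \<epsilon>" using M \<epsilon> by simp
    consider "t \<le> tau 0" | "tau 0 < t" "t \<le> tau (Suc 0)" | "tau (Suc 0) < t" by linarith
    then show ?thesis
    proof cases
      case 1
      have "norm x0 \<le> M * norm x0" using M by (simp add: mult_le_cancel_right1)
      then show ?thesis using 1 x0_small by (simp add: imp_sol_before_start)
    next
      case 2
      then show ?thesis using first[OF 2, of x0] x0_small by linarith
    next
      case 3
      then obtain s where s: "s \<ge> 0" "norm (x_sol x0 t) \<le> M * norm (z_sol (z_init x0) s)"
        using later by blast
      have "norm x0 < \<delta>' / K" using x0 by (simp add: \<delta>_def)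
      then have "norm x0 * K < \<delta>'" using K(1) by (simp add: pos_less_divide_eq)
      then have "norm (z_init x0) < \<delta>'"
        using K(2)[of x0] by linarith
      then have "M * norm (z_sol (z_init x0) s) \<le> M * (\<epsilon> / (2 * M))"
        using \<delta>'(2) s(1) M by (intro mult_left_mono) auto
      then show ?thesis using s(2) M \<epsilon> by simp
    qed
  qed
  moreover have "\<delta> > 0" using \<delta>'(1) K(1) \<epsilon> M by (simp add: \<delta>_def)
  ultimately show ?thesis by blast
qed

lemma x_sol_attractive:
  assumes z_attractive: "\<And>z. (z_sol z \<longlongrightarrow> 0) at_top"
  shows "(x_sol x0 \<longlongrightarrow> 0) at_top"
proof (rule tendstoI)
  fix \<epsilon> :: real assume \<epsilon>: "\<epsilon> > 0"
  obtain M where M: "M \<ge> 1"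
    and first: "\<And>x0 t. tau 0 < t \<Longrightarrow> t \<le> tau (Suc 0) \<Longrightarrow> norm (x_sol x0 t) \<le> M * norm x0"
    and later: "\<And>x0 t. tau (Suc 0) < t \<Longrightarrow>
      \<exists>s\<ge>0. t - tau 0 - 2 * \<theta> - \<chi>max \<le> s \<and> norm (x_sol x0 t) \<le> M * norm (z_sol (z_init x0) s)"
    by (rule x_sol_dominated) (rule that)
  have "eventually (\<lambda>s. dist (z_sol (z_init x0) s) 0 < \<epsilon> / M) at_top"
    using tendstoD[OF z_attractive, of "\<epsilon> / M"] \<epsilon> M by simp
  then obtain S where S: "\<And>s. s \<ge> S \<Longrightarrow> norm (z_sol (z_init x0) s) < \<epsilon> / M"
    unfolding eventually_at_top_linorder by auto
  have "dist (x_sol x0 t) 0 < \<epsilon>" if t: "t \<ge> max (tau (Suc 0) + 1) (S + tau 0 + 2 * \<theta> + \<chi>max)" for t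
  proof -
    obtain s where s: "t - tau 0 - 2 * \<theta> - \<chi>max \<le> s" "norm (x_sol x0 t) \<le> M * norm (z_sol (z_init x0) s)"
      using later[of t x0] t by auto
    have "M * norm (z_sol (z_init x0) s) < M * (\<epsilon> / M)"
      using S[of s] s(1) t M by (intro mult_strict_left_mono) auto
    then show ?thesis using s(2) M by simp
  qed
  then show "eventually (\<lambda>t. dist (x_sol x0 t) 0 < \<epsilon>) at_top"
    unfolding eventually_at_top_linorder by blast
qed

lemma asym_stable_of_comparison:
  assumes stable: "asym_stable T (\<lambda>k. real k * \<theta>) G D" and dense: "closure D = UNIV"
  shows "asym_stable T tau (\<lambda>k. B) D'"
proof -
  have z_stable_D: "\<forall>\<epsilon>>0. \<exists>\<delta>>0. \<forall>z\<in>D. norm z < \<delta> \<longrightarrow> (\<forall>s\<ge>0. norm (z_sol z s) < \<epsilon>)"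
    and z_attractive_D: "\<forall>z\<in>D. (z_sol z \<longlongrightarrow> 0) at_top"
    using stable unfolding asym_stable_def by simp_all
  have z_stable: "\<forall>\<epsilon>>0. \<exists>\<delta>>0. \<forall>z. norm z < \<delta> \<longrightarrow> (\<forall>s\<ge>0. norm (z_sol z s) \<le> \<epsilon>)"
    by (rule uniform_bound_extends_from_dense[OF bounded_linear_z_sol dense z_stable_D])
  have z_attractive: "(z_sol z \<longlongrightarrow> 0) at_top" for z
    by (rule tendsto_zero_extends_from_dense[OF bounded_linear_z_sol dense z_stable z_attractive_D])
  show ?thesis
    unfolding asym_stable_def
  proof (intro conjI allI impI ballI)
    fix \<epsilon> :: real assume "\<epsilon> > 0"
    then show "\<exists>\<delta>>0. \<forall>x0\<in>D'. norm x0 < \<delta> \<longrightarrow> (\<forall>t\<ge>tau 0. norm (x_sol x0 t) < \<epsilon>)"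
      using x_sol_stable[OF z_stable] by blast
  qed (rule x_sol_attractive[OF z_attractive])
qed
end

lemma C0_semigroup_if_generates: "generates_semigroup A T \<Longrightarrow> C0_semigroup T"
  by (rule C0_semigroup.intro) (auto simp: generates_semigroup_def)

lemma commutator_expansion_if_generates:
  fixes cs :: "complex \<Rightarrow> 'a::banach \<Rightarrow> 'a"
  assumes cs: "complex_scaling cs" and linA: "lin_op cs A" and gen: "generates_semigroup A T"
    and comm: "nested_commutators A B C" and comm_inv: "\<And>m. app (C m) ` dom A \<subseteq> dom A"
    and t0: "t0 \<ge> 0" and bounded_Cm_T: "\<And>m. bounded_linear (\<lambda>x. app (C m) (T t0 x))"
  shows "commutator_expansion T (dom A) (app A) (\<lambda>m. app (C m)) t0"
proof -
  interpret C0_semigroup T using gen by (rule C0_semigroup_if_generates)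
  have generator: "generator_limit x (app A x)" if "x \<in> dom A" for x
    using gen that by (simp add: generates_semigroup_def generator_limit_def)
  have domain: "dom A = {x. \<exists>y. generator_limit x y}"
    using gen by (simp add: generates_semigroup_def generator_limit_def)
  have Ad_T: "T t x \<in> dom A" if "x \<in> dom A" "t \<ge> 0" for x t
    using generator_limit_T[OF generator[OF that(1)] that(2)] domain by blast
  have scaleR: "cs (complex_of_real c) x = c *\<^sub>R x" for c x
    using cs by (simp add: complex_scaling_def)
  show ?thesis
  proof (intro commutator_expansion.intro commutator_expansion_axioms.intro)
    show "C0_semigroup T" by unfold_locales
    show "app A (T t x) = T t (app A x)" if "x \<in> dom A" "t \<ge> 0" for x t
      using generator_limit_T[OF generator[OF that(1)] that(2)] generator[OF Ad_T[OF that]]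
      unfolding generator_limit_def using tendsto_unique trivial_limit_at_right_real by blast
    show "app (C (Suc m)) x = app (C m) (app A x) - app A (app (C m) x)" if "x \<in> dom A" for x m
    proof -
      have "dom A \<subseteq> hatD A (C m)"
        and "is_closure_of (C (Suc m)) (hatD A (C m), \<lambda>x. app (C m) (app A x) - app A (app (C m) x))"
        using comm by (auto simp: nested_commutators_def)
      then show ?thesis using is_closure_of_app that by fastforce
    qed
    show "c *\<^sub>R x \<in> dom A \<and> app A (c *\<^sub>R x) = c *\<^sub>R app A x" if "x \<in> dom A" for x c
      using linA that unfolding lin_op_def scaleR[symmetric] by blast
    show "app (C m) x \<in> dom A" if "x \<in> dom A" for x m
      using comm_inv that by blast
  qed (use generator Ad_T linA t0 bounded_Cm_T in \<open>auto simp: lin_op_def\<close>)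
qed

theorem theorem1:
  fixes cs :: "complex \<Rightarrow> 'a::banach \<Rightarrow> 'a"
    and A B :: "'a opr" and T :: "real \<Rightarrow> 'a \<Rightarrow> 'a" and C :: "nat \<Rightarrow> 'a opr"
    and a \<phi> K \<eta> K1 \<theta> \<chi>max :: real and tau :: "nat \<Rightarrow> real"
  assumes cs: "complex_scaling cs"
    and sect: "sectorial_with cs A a \<phi> K"
    and gen: "generates_semigroup A T"
    and B_lin: "lin_op cs B" and B_closed: "closed_op B"
    and B_dom: "dom A \<subseteq> dom B" and B_inv: "app B ` dom A \<subseteq> dom A"
    and comm: "nested_commutators A B C"
    and comm_inv: "\<And>m. app (C m) ` dom A \<subseteq> dom A"
    and \<eta>: "\<eta> > 0" and K1: "K1 > 0"
    and comm_bound: "\<And>m l. l \<in> sector a \<phi> \<Longrightarrow>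
          bounded_linear (app (C m) \<circ> resolvent cs A l) \<and>
          onorm (app (C m) \<circ> resolvent cs A l) \<le> K1 * \<eta> ^ m / cmod (l - complex_of_real a)"
    and tau_mono: "strict_mono tau" and tau_lim: "filterlim tau at_top sequentially"
    and \<theta>: "\<theta> > 0" and \<chi>max: "0 \<le> \<chi>max" "\<chi>max < \<theta>"
    and dwell: "\<And>k. \<bar>tau k - tau 0 - real k * \<theta>\<bar> \<le> \<chi>max"
    and commT: "\<And>m. range (T (\<theta> - \<chi>max)) \<subseteq> dom (C m) \<and>
                      bounded_linear (app (C m) \<circ> T (\<theta> - \<chi>max))"
    and limsup: "ereal (2 * exp 1 * \<chi>max) *
          limsup (\<lambda>m. ereal (root m (onorm (app (C m) \<circ> T (\<theta> - \<chi>max))) / real m)) < 1"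
    and stableC: "asym_stable T (\<lambda>k. real k * \<theta>)
          (\<lambda>k z. app B z + (\<Sum>m. ((\<chi>max + (tau (Suc k) - tau 0 - real (Suc k) * \<theta>)) ^ Suc m
                                    / fact (Suc m)) *\<^sub>R app (C (Suc m)) z))
          (dom A)"
  shows "asym_stable T tau (\<lambda>k. app B) (dom A)"
proof -
  define t0 where "t0 = \<theta> - \<chi>max"
  define \<sigma> where "\<sigma> k = \<chi>max + (tau k - tau 0 - real k * \<theta>)" for k
  have dense: "closure (dom A) = UNIV"
    using sect by (simp add: sectorial_with_def densely_defined_def)
  have "C 0 = B" using comm by (simp add: nested_commutators_def)
  interpret E: commutator_expansion T "dom A" "app A" "\<lambda>m. app (C m)" t0
    using commutator_expansion_if_generates[OF cs _ gen comm comm_inv] sect commT \<chi>max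
    by (simp add: sectorial_with_def t0_def comp_def)
  note expansion = E.jump_expansion_under_limsup[OF dense \<chi>max(1),
      unfolded \<open>C 0 = B\<close>, OF limsup[unfolded comp_def t0_def[symmetric]]]
  have \<sigma>_bounds: "0 \<le> \<sigma> k" "\<sigma> k \<le> 2 * \<chi>max" for k
    using dwell[of k] by (simp_all add: \<sigma>_def abs_le_iff)
  interpret D: dwell_comparison T "app B"
    "\<lambda>k z. app B z + (\<Sum>m. ((\<chi>max + (tau (Suc k) - tau 0 - real (Suc k) * \<theta>)) ^ Suc m
                                    / fact (Suc m)) *\<^sub>R app (C (Suc m)) z)" tau \<theta> \<chi>max \<sigma>
  proof (intro dwell_comparison.intro dwell_comparison_axioms.intro)
    fix k w
    show "app B (T (\<sigma> (Suc k) + (\<theta> - \<chi>max)) w) = T (\<sigma> (Suc k))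
      (app B (T (\<theta> - \<chi>max) w) + (\<Sum>m. ((\<chi>max + (tau (Suc k) - tau 0 - real (Suc k) * \<theta>)) ^ Suc m
                                    / fact (Suc m)) *\<^sub>R app (C (Suc m)) (T (\<theta> - \<chi>max) w)))"
      using expansion(1)[OF \<sigma>_bounds, of "Suc k" w] by (simp add: \<sigma>_def t0_def)
    show "bounded_linear (\<lambda>w. app B (T (\<theta> - \<chi>max) w) + (\<Sum>m. ((\<chi>max + (tau (Suc k) - tau 0 - real (Suc k) * \<theta>)) ^ Suc m
                                    / fact (Suc m)) *\<^sub>R app (C (Suc m)) (T (\<theta> - \<chi>max) w)))"
      using expansion(2)[OF \<sigma>_bounds, of "Suc k"] by (simp add: \<sigma>_def t0_def)
  qed (use tau_mono \<theta> \<chi>max dwell \<sigma>_def E.C0_semigroup_axioms in auto)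
  show ?thesis by (rule D.asym_stable_of_comparison[OF stableC dense])
qed

end
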